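(* Let $n\ge 2$, $q=p^e$ a prime power, $\mu$ a generator of $\mathbb{F}_q^*$, $V=\mathbb{F}_q^{n+1}$ with standard basis $v_0,\dots,v_n$, $\alpha_0=\langle v_0\rangle_{\mathbb{F}_q}$, and let $Z\mathrm{SL}_{n+1}(q)\le G\le \Gamma\mathrm{L}_{n+1}(q)$, where $Z$ is the group of scalar matrices. Let $M\le L\le G(\alpha_0)$. Then the following are equivalent: (i) the action of $G$ on $G/L$ is $2$-by-block-transitive with block stabilizer $G(\alpha_0)$; (ii) $e_L=e_G$ and $\det(L_{\mathrm{GL}})=\det(G_{\mathrm{GL}})$; (iii) $e_L=e_G$ and the index $|G(\alpha_0):L|$ is coprime to $|\mathrm{Pdet}(G_{\mathrm{GL}})|$.
   Context: $G(\alpha_0)$ is the stabilizer of the line $\alpha_0$; $W$ is the subgroup of $G$ acting trivially on $\alpha_0$ and on $V/\alpha_0$; $\mathrm{SL}_n(q)$ is the group of determinant-$1$ linear maps fixing $v_0$ and preserving $\langle v_1,\dots,v_n\rangle$; $M=W\rtimes Z\mathrm{SL}_n(q)$. For $H\le\Gamma\mathrm{L}_{n+1}(q)$, $H_{\mathrm{GL}} = H\cap\mathrm{GL}_{n+1}(q)$ and $e_H = |H:H_{\mathrm{GL}}|$. For $g\in\mathrm{GL}_{n+1}(q)$, $\mathrm{Pdet}(g)$ is the image of $\det(g)$ in $\mathbb{F}_q^*/\langle\mu^{n+1}\rangle$, and $\mathrm{Pdet}(H_{\mathrm{GL}})$ is the set of such images for $g\in H_{\mathrm{GL}}$. The action on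 $G/L$ is $2$-by-block-transitive with block stabilizer $G(\alpha_0)$ if $G$ is transitive on pairs $(aL,bL)$ with $aG(\alpha_0)\neq bG(\alpha_0)$. *)

theory Defs
  imports "HOL-Analysis.Analysis"
begin

text \<open>Vectors of V = F_q^(n+1) are elements of type 'a^'n with CARD('n) = n+1;
  group elements are bijections of V, the group operation is composition.\<close>

type_synonym ('a, 'n) vmap = "'a^'n \<Rightarrow> 'a^'n"

definition field_aut :: "('a::field \<Rightarrow> 'a) \<Rightarrow> bool" where
  "field_aut s \<longleftrightarrow> bij s \<and> (\<forall>x y. s (x + y) = s x + s y \<and> s (x * y) = s x * s y)"

definition semilinear :: "('a::field \<Rightarrow> 'a) \<Rightarrow> ('a, 'n::finite) vmap \<Rightarrow> bool" where
  "semilinear s g \<longleftrightarrow> (\<forall>x y. g (x + y) = g x + g y) \<and> (\<forall>c x. g (c *s x) = s c *s g x)"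

definition GammaL :: "('a::field, 'n::finite) vmap set" where
  "GammaL = {g. bij g \<and> (\<exists>s. field_aut s \<and> semilinear s g)}"

definition GL :: "('a::field, 'n::finite) vmap set" where
  "GL = {g. bij g \<and> semilinear id g}"

definition std_basis :: "'n::finite \<Rightarrow> 'a::zero_neq_one^'n" where
  "std_basis j = (\<chi> k. if k = j then 1 else 0)"

definition mat_of :: "('a::field, 'n::finite) vmap \<Rightarrow> 'a^'n^'n" where
  "mat_of g = (\<chi> i j. (g (std_basis j)) $ i)"

definition gdet :: "('a::field, 'n::finite) vmap \<Rightarrow> 'a" where
  "gdet g = det (mat_of g)"

definition SL :: "('a::field, 'n::finite) vmap set" where
  "SL = {g \<in> GL. gdet g = 1}"

definition Zsc :: "('a::field, 'n::finite) vmap set" where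
  "Zsc = {(\<lambda>x. c *s x) | c. c \<noteq> 0}"

definition setprod :: "('a, 'n) vmap set \<Rightarrow> ('a, 'n) vmap set \<Rightarrow> ('a, 'n) vmap set" where
  "setprod A B = {a \<circ> b | a b. a \<in> A \<and> b \<in> B}"

definition is_subgroup :: "('a::field, 'n::finite) vmap set \<Rightarrow> bool" where
  "is_subgroup H \<longleftrightarrow> H \<subseteq> GammaL \<and> id \<in> H \<and> (\<forall>g\<in>H. \<forall>h\<in>H. g \<circ> h \<in> H)
     \<and> (\<forall>g\<in>H. inv g \<in> H)"

text \<open>The line alpha_0 = <v_0> and the hyperplane <v_1,...,v_n> (i0 plays the role of index 0).\<close>
definition line0 :: "'n::finite \<Rightarrow> ('a::field^'n) set" where
  "line0 i0 = {c *s std_basis i0 | c. True}"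

definition hyp0 :: "'n::finite \<Rightarrow> ('a::field^'n) set" where
  "hyp0 i0 = {x. x $ i0 = 0}"

definition stab0 :: "'n::finite \<Rightarrow> ('a::field, 'n::finite) vmap set \<Rightarrow> ('a, 'n) vmap set" where
  "stab0 i0 G = {g \<in> G. g ` line0 i0 = line0 i0}"

definition Wgrp :: "'n::finite \<Rightarrow> ('a::field, 'n::finite) vmap set \<Rightarrow> ('a, 'n) vmap set" where
  "Wgrp i0 G = {g \<in> G. (\<forall>x \<in> line0 i0. g x = x) \<and> (\<forall>x. g x - x \<in> line0 i0)}"

definition SLn :: "'n::finite \<Rightarrow> ('a::field, 'n::finite) vmap set" where
  "SLn i0 = {g \<in> GL. gdet g = 1 \<and> g (std_basis i0) = std_basis i0 \<and> g ` hyp0 i0 = hyp0 i0}"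

definition Mgrp :: "'n::finite \<Rightarrow> ('a::field, 'n::finite) vmap set \<Rightarrow> ('a, 'n) vmap set" where
  "Mgrp i0 G = setprod (Wgrp i0 G) (setprod Zsc (SLn i0))"

definition GLpart :: "('a::field, 'n::finite) vmap set \<Rightarrow> ('a, 'n) vmap set" where
  "GLpart H = H \<inter> GL"

definition eidx :: "('a::field, 'n::finite) vmap set \<Rightarrow> nat" where
  "eidx H = card H div card (GLpart H)"

definition dets :: "('a::field, 'n::finite) vmap set \<Rightarrow> 'a set" where
  "dets H = gdet ` H"

text \<open>Pdet(g): image of det g in F_q^*/<mu^(n+1)>, represented as the coset det(g) <mu^(n+1)>.\<close>
definition Pdet :: "'a::field \<Rightarrow> ('a, 'n::finite) vmap \<Rightarrow> 'a set" where
  "Pdet mu g = (\<lambda>y. gdet g * y) ` {mu ^ (k * CARD('n)) | k. True}"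

definition Pdets :: "'a::field \<Rightarrow> ('a, 'n::finite) vmap set \<Rightarrow> 'a set set" where
  "Pdets mu H = Pdet mu ` H"

definition lcoset :: "('a, 'n) vmap \<Rightarrow> ('a, 'n) vmap set \<Rightarrow> ('a, 'n) vmap set" where
  "lcoset a H = (\<lambda>h. a \<circ> h) ` H"

definition two_by_block_transitive ::
  "('a, 'n) vmap set \<Rightarrow> ('a, 'n) vmap set \<Rightarrow> ('a, 'n) vmap set \<Rightarrow> bool" where
  "two_by_block_transitive G L B \<longleftrightarrow>
     (\<forall>a\<in>G. \<forall>b\<in>G. \<forall>c\<in>G. \<forall>d\<in>G.
        lcoset a B \<noteq> lcoset b B \<and> lcoset c B \<noteq> lcoset d B \<longrightarrow>
        (\<exists>g\<in>G. lcoset (g \<circ> a) L = lcoset c L \<and> lcoset (g \<circ> b) L = lcoset d L))"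

end

theory Submission
  imports Defs
begin

text \<open>
  Every \<open>g \<in> B = G(\<alpha>\<^sub>0)\<close> acts on \<open>\<alpha>\<^sub>0\<close> by a scalar \<open>\<lambda>(g)\<close>, and the reduced determinant
  \<open>\<psi>(g) = det g / \<lambda>(g)\<^bsup>n+1\<^esup>\<close> is a crossed homomorphism on \<open>B\<close>, twisted by the field
  automorphism of \<open>g\<close>. Its kernel on \<open>B \<inter> GL\<close> lies in \<open>M \<subseteq> L\<close>, so a subgroup \<open>L\<close> between
  \<open>M\<close> and \<open>B\<close> is determined by its Galois part and by \<open>\<psi>(L \<inter> GL)\<close>; moreover
  \<open>det(L \<inter> GL) = (\<bbbF>\<^sub>q\<^sup>*)\<^bsup>n+1\<^esup> \<psi>(L \<inter> GL)\<close>.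

  By the Bruhat decomposition \<open>G = B \<union> B t B\<close>, 2-by-block-transitivity amounts to finding,
  for all \<open>p, q, r, s \<in> B\<close>, some \<open>z \<in> B\<close> with \<open>p z q \<in> L\<close> and \<open>r z\<^sup>t s \<in> L\<close>. Conjugation by
  \<open>t\<close> changes \<open>\<psi>\<close> by an arbitrary \<open>(n + 1)\<close>-th power on suitable diagonal elements of \<open>SL\<close>,
  which makes this solvable exactly when \<open>L\<close> has the full Galois part and
  \<open>det(L \<inter> GL) = det(G \<inter> GL)\<close>.

  Finally \<open>D = det(G \<inter> GL)\<close> is cyclic, so \<open>D = (\<bbbF>\<^sub>q\<^sup>*)\<^bsup>n+1\<^esup> \<psi>(L \<inter> GL)\<close> holds iff the
  indices of the two factors in \<open>D\<close> are coprime. These indices are \<open>|Pdet(G \<inter> GL)|\<close> and,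
  when the Galois parts agree, \<open>|G(\<alpha>\<^sub>0) : L|\<close>.
\<close>

section \<open>Field automorphisms and semilinear maps\<close>

lemma field_aut_add: "field_aut s \<Longrightarrow> s (x + y) = s x + s y"
  by (simp add: field_aut_def)

lemma field_aut_mult: "field_aut s \<Longrightarrow> s (x * y) = s x * s y"
  by (simp add: field_aut_def)

lemma field_aut_bij: "field_aut s \<Longrightarrow> bij s"
  by (simp add: field_aut_def)

lemma field_aut_zero: "field_aut s \<Longrightarrow> s 0 = (0::'a::field)"
  using field_aut_add[of s 0 0] by (metis add_0 add_cancel_right_right)

lemma field_aut_eq_0_iff: "field_aut s \<Longrightarrow> s x = 0 \<longleftrightarrow> x = (0::'a::field)"
  by (metis field_aut_bij field_aut_zero bij_is_inj injD)

lemma field_aut_one: "field_aut s \<Longrightarrow> s 1 = (1::'a::field)"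
  using field_aut_mult[of s 1 1] field_aut_eq_0_iff[of s 1] by simp

lemma field_aut_minus: "field_aut s \<Longrightarrow> s (- x) = - s (x::'a::field)"
  using field_aut_add[of s x "- x"] field_aut_zero[of s] by (metis add.right_inverse minus_unique)

lemma field_aut_inverse:
  assumes s: "field_aut s"
  shows "s (inverse x) = inverse (s (x::'a::field))"
proof (cases "x = 0")
  case False
  then have "s x * s (inverse x) = 1"
    using field_aut_mult[OF s, of x "inverse x"] field_aut_one[OF s] by simp
  then show ?thesis
    by (metis inverse_unique)
qed (simp add: field_aut_zero[OF s])

lemma field_aut_divide: "field_aut s \<Longrightarrow> s (x / y) = s x / s (y::'a::field)"
  by (simp add: divide_inverse field_aut_mult field_aut_inverse)

lemma field_aut_power: "field_aut s \<Longrightarrow> s (x ^ k) = s (x::'a::field) ^ k"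
  by (induction k) (simp_all add: field_aut_one field_aut_mult)

lemma field_aut_sum: "field_aut s \<Longrightarrow> s (sum f A) = (\<Sum>x\<in>A. s (f x::'a::field))"
  by (induction A rule: infinite_finite_induct) (simp_all add: field_aut_zero field_aut_add)

lemma field_aut_prod: "field_aut s \<Longrightarrow> s (prod f A) = (\<Prod>x\<in>A. s (f x::'a::field))"
  by (induction A rule: infinite_finite_induct) (simp_all add: field_aut_one field_aut_mult)

definition map_matrix :: "('a \<Rightarrow> 'a) \<Rightarrow> 'a^'n^'m \<Rightarrow> 'a^'n^'m" where
  "map_matrix s M = (\<chi> i j. s (M$i$j))"

lemma field_aut_det:
  assumes s: "field_aut s"
  shows "s (det M) = det (map_matrix s (M::'a::field^'n::finite^'n))"
proof -
  have sign: "s (of_int (sign p)) = of_int (sign p)" for p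
    using field_aut_one[OF s] field_aut_minus[OF s] by (simp add: sign_def)
  show ?thesis
    unfolding det_def map_matrix_def
    by (simp add: field_aut_sum[OF s] field_aut_mult[OF s] field_aut_prod[OF s] sign)
qed

lemma field_aut_id: "field_aut id"
  by (simp add: field_aut_def)

lemma field_aut_comp: "field_aut s \<Longrightarrow> field_aut t \<Longrightarrow> field_aut (s \<circ> t)"
  by (simp add: field_aut_def bij_comp)

lemma semilinear_add: "semilinear s g \<Longrightarrow> g (x + y) = g x + g y"
  by (simp add: semilinear_def)

lemma semilinear_scale: "semilinear s g \<Longrightarrow> g (c *s x) = s c *s g x"
  by (simp add: semilinear_def)

lemma linear_scale: "semilinear id g \<Longrightarrow> g (c *s x) = c *s g x"
  by (simp add: semilinear_def)

lemma semilinear_zero: "semilinear s g \<Longrightarrow> g 0 = 0"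
  using semilinear_add[of s g 0 0] by simp

lemma semilinear_sum: "semilinear s g \<Longrightarrow> g (sum f A) = (\<Sum>x\<in>A. g (f x))"
  by (induction A rule: infinite_finite_induct) (simp_all add: semilinear_zero semilinear_add)

lemma semilinear_diff: "semilinear s g \<Longrightarrow> g (x - y) = g x - g (y::'a::field^'n)"
  by (metis semilinear_add diff_add_cancel eq_diff_eq)

lemma semilinear_comp: "semilinear s g \<Longrightarrow> semilinear t h \<Longrightarrow> semilinear (s \<circ> t) (g \<circ> h)"
  by (simp add: semilinear_def)

lemma semilinear_id: "semilinear id id"
  by (simp add: semilinear_def)

lemma std_basis_nth: "std_basis j $ k = (if k = j then 1 else 0)"
  by (simp add: std_basis_def)

lemma std_basis_nonzero: "std_basis j \<noteq> (0::'a::field^'n::finite)"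
  by (simp add: std_basis_def vec_eq_iff)

lemma semilinear_component:
  assumes "semilinear s g"
  shows "g x $ i = (\<Sum>j\<in>UNIV. mat_of g $ i $ j * s (x$j))"
proof -
  have "g x = g (\<Sum>j\<in>UNIV. (x$j) *s std_basis j)"
    by (simp add: std_basis_def basis_expansion flip: axis_def)
  also have "\<dots> = (\<Sum>j\<in>UNIV. s (x$j) *s g (std_basis j))"
    by (simp add: semilinear_sum[OF assms] semilinear_scale[OF assms])
  finally show ?thesis
    by (simp add: mat_of_def sum_component mult.commute)
qed

lemma mat_of_comp:
  assumes "semilinear s g"
  shows "mat_of (g \<circ> h) = mat_of g ** map_matrix s (mat_of h)"
proof -
  have "mat_of (g \<circ> h) $ i $ j = (mat_of g ** map_matrix s (mat_of h)) $ i $ j" for i j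
    using semilinear_component[OF assms, of "h (std_basis j)" i]
    by (simp add: matrix_matrix_mult_def map_matrix_def mat_of_def[of h] mat_of_def[of "g \<circ> h"])
  then show ?thesis
    by (simp add: vec_eq_iff)
qed

lemma gdet_comp:
  assumes "semilinear s g" "field_aut s"
  shows "gdet (g \<circ> h) = gdet g * s (gdet h)"
  by (simp add: gdet_def mat_of_comp[OF assms(1)] det_mul field_aut_det[OF assms(2)])

lemma gdet_comp_linear: "semilinear id g \<Longrightarrow> gdet (g \<circ> h) = gdet g * gdet h"
  using gdet_comp[of id g h] field_aut_id by simp

lemma mat_of_id: "mat_of (id::('a::field,'n::finite) vmap) = mat 1"
  by (simp add: mat_of_def vec_eq_iff std_basis_def mat_def)

lemma gdet_id: "gdet (id::('a::field,'n::finite) vmap) = 1"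
  by (simp add: gdet_def mat_of_id)

lemma semilinear_aut_unique:
  assumes "semilinear s g" "semilinear t g" "g x \<noteq> (0::'a::field^'n::finite)"
  shows "s = t"
proof
  fix c
  have "(s c - t c) *s g x = 0"
    using semilinear_scale[OF assms(1)] semilinear_scale[OF assms(2)]
    by (metis vector_sub_rdistrib right_minus_eq)
  then show "s c = t c"
    using assms(3) by (simp add: vec_eq_iff) (metis right_minus_eq)
qed

lemma GL_bij: "g \<in> GL \<Longrightarrow> bij g"
  by (simp add: GL_def)

lemma GL_linear: "g \<in> GL \<Longrightarrow> semilinear id g"
  by (simp add: GL_def)

lemma SL_GL: "g \<in> SL \<Longrightarrow> g \<in> GL"
  by (simp add: SL_def)

lemma SL_gdet: "g \<in> SL \<Longrightarrow> gdet g = 1"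
  by (simp add: SL_def)

lemma id_SL: "id \<in> SL"
  by (simp add: SL_def GL_def semilinear_id gdet_id)

lemma GL_comp: "g \<in> GL \<Longrightarrow> h \<in> GL \<Longrightarrow> g \<circ> h \<in> GL"
  using semilinear_comp[of id g id h] by (auto simp: GL_def bij_comp)

lemma SL_comp: "g \<in> SL \<Longrightarrow> h \<in> SL \<Longrightarrow> g \<circ> h \<in> SL"
  using GL_comp[of g h] gdet_comp_linear[of g h] by (auto simp: SL_def GL_def)

lemma det_identity_add_to_row:
  fixes x :: "'a::field^'n::finite"
  assumes "x$i = 0"
  shows "det ((\<chi> k. if k = i then row i (mat 1) + x else row k (mat 1)) :: 'a^'n^'n) = 1"
proof -
  have rows: "row j (mat 1 :: 'a^'n^'n) = axis j 1" for j
    by (simp add: row_def mat_def axis_def vec_eq_iff eq_commute)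
  have "x = (\<Sum>j\<in>UNIV. (x$j) *s axis j 1)"
    by (simp add: basis_expansion)
  also have "\<dots> = (\<Sum>j\<in>UNIV - {i}. (x$j) *s axis j 1)"
    by (rule sum.mono_neutral_right) (auto simp: assms)
  finally have "x \<in> vec.span {row j (mat 1 :: 'a^'n^'n) | j. j \<noteq> i}"
    by (metis (mono_tags, lifting) rows DiffD2 insertCI mem_Collect_eq vec.span_base
        vec.span_scale vec.span_sum)
  from det_row_span[OF this] show ?thesis
    by simp
qed

definition transvection :: "'n \<Rightarrow> 'a \<Rightarrow> 'a^'n \<Rightarrow> ('a::field, 'n::finite) vmap" where
  "transvection j c u = (\<lambda>x. x + (c * x$j) *s u)"

definition row_transvection :: "'n \<Rightarrow> 'a^'n \<Rightarrow> ('a::field, 'n::finite) vmap" where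
  "row_transvection i r = (\<lambda>x. x + (\<Sum>k\<in>UNIV. r$k * x$k) *s std_basis i)"

definition diag_map :: "('n \<Rightarrow> 'a) \<Rightarrow> ('a::field, 'n::finite) vmap" where
  "diag_map d = (\<lambda>x. \<chi> i. d i * x$i)"

definition scalar_map :: "'a \<Rightarrow> ('a::field, 'n::finite) vmap" where
  "scalar_map c = (\<lambda>x. c *s x)"

lemma transvection_SL:
  assumes "u$j = 0"
  shows "transvection j c u \<in> SL"
proof -
  have "transvection j (- c) u \<circ> transvection j c u = id"
    "transvection j c u \<circ> transvection j (- c) u = id"
    using assms by (simp_all add: fun_eq_iff transvection_def vec_eq_iff algebra_simps)
  then have "bij (transvection j c u)"
    using o_bij by blast
  moreover have "semilinear id (transvection j c u)"
    by (simp add: semilinear_def transvection_def vec_eq_iff algebra_simps)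
  moreover have "mat_of (transvection j c u)
      = transpose (\<chi> k. if k = j then row j (mat 1) + c *s u else row k (mat 1))"
    by (simp add: vec_eq_iff mat_of_def transvection_def transpose_def row_def mat_def std_basis_nth)
  then have "gdet (transvection j c u) = 1"
    using det_identity_add_to_row[of "c *s u" j] assms by (simp add: gdet_def)
  ultimately show ?thesis
    by (simp add: SL_def GL_def)
qed

lemma row_transvection_inverse:
  assumes "r$i = 0"
  shows "row_transvection i (- r) \<circ> row_transvection i r = id"
proof -
  have ri: "(\<Sum>k\<in>UNIV. r$k * std_basis i $ k) = 0"
    using assms by (simp add: std_basis_nth if_distrib cong: if_cong)
  have "row_transvection i (- r) (row_transvection i r x) = x" for x
  proof -
    define c where "c = (\<Sum>k\<in>UNIV. r$k * x$k)"
    have "(\<Sum>k\<in>UNIV. (- r)$k * (x + c *s std_basis i) $ k)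
        = - (\<Sum>k\<in>UNIV. r$k * x$k) - c * (\<Sum>k\<in>UNIV. r$k * std_basis i $ k)"
      by (simp add: algebra_simps sum.distrib sum_distrib_left sum_negf sum_subtractf)
    then show ?thesis
      using ri unfolding row_transvection_def c_def[symmetric] by (simp add: algebra_simps)
  qed
  then show ?thesis
    by (simp add: fun_eq_iff)
qed

lemma row_transvection_SL:
  assumes "r$i = 0"
  shows "row_transvection i r \<in> SL"
proof -
  have "bij (row_transvection i r)"
    using o_bij row_transvection_inverse[of r i] row_transvection_inverse[of "- r" i] assms by simp
  moreover have "semilinear id (row_transvection i r)"
    by (simp add: semilinear_def row_transvection_def vec_eq_iff algebra_simps sum.distrib
        sum_distrib_left)
  moreover have "mat_of (row_transvection i r) = (\<chi> k. if k = i then row i (mat 1) + r else row k (mat 1))"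
    by (simp add: vec_eq_iff mat_of_def row_transvection_def row_def mat_def std_basis_nth if_distrib
        cong: if_cong)
  then have "gdet (row_transvection i r) = 1"
    using det_identity_add_to_row[of r i] assms by (simp add: gdet_def)
  ultimately show ?thesis
    by (simp add: SL_def GL_def)
qed

lemma diag_map_GL:
  assumes "\<forall>i. d i \<noteq> 0"
  shows "diag_map d \<in> GL"
proof -
  have "diag_map (\<lambda>i. inverse (d i)) \<circ> diag_map d = id" "diag_map d \<circ> diag_map (\<lambda>i. inverse (d i)) = id"
    using assms by (simp_all add: fun_eq_iff diag_map_def vec_eq_iff)
  then show ?thesis
    using o_bij by (auto simp: GL_def semilinear_def diag_map_def vec_eq_iff algebra_simps)
qed

lemma gdet_diag_map: "gdet (diag_map d) = prod d UNIV"
proof -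
  have "mat_of (diag_map d) = (\<chi> i j. if i = j then d i else 0)"
    by (simp add: vec_eq_iff mat_of_def diag_map_def std_basis_nth)
  then show ?thesis
    by (simp add: gdet_def det_diagonal)
qed

lemma scalar_map_diag_map: "scalar_map c = diag_map (\<lambda>_. c)"
  by (simp add: fun_eq_iff scalar_map_def diag_map_def vec_eq_iff)

lemma scalar_map_GL: "c \<noteq> 0 \<Longrightarrow> scalar_map c \<in> GL"
  by (simp add: scalar_map_diag_map diag_map_GL)

lemma gdet_scalar_map: "gdet (scalar_map c :: ('a::field,'n::finite) vmap) = c ^ CARD('n)"
  by (simp add: scalar_map_diag_map gdet_diag_map)

lemma scalar_map_Zsc: "c \<noteq> 0 \<Longrightarrow> scalar_map c \<in> Zsc"
  by (auto simp: Zsc_def scalar_map_def)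

definition bij_group :: "('b \<Rightarrow> 'b) set \<Rightarrow> bool" where
  "bij_group H \<longleftrightarrow> id \<in> H \<and> (\<forall>g\<in>H. \<forall>h\<in>H. g \<circ> h \<in> H) \<and> (\<forall>g\<in>H. inv g \<in> H) \<and> (\<forall>g\<in>H. bij g)"

lemma bij_comp_inv: "bij f \<Longrightarrow> f \<circ> inv f = id"
  using bij_is_surj surj_iff by blast

lemma bij_comp_right_cancel:
  assumes "bij h" "f \<circ> h = g \<circ> h"
  shows "f = g"
proof
  fix x
  have "f (h (inv h x)) = g (h (inv h x))"
    using assms(2) by (metis comp_apply)
  then show "f x = g x"
    using assms(1) by (simp add: bij_is_surj surj_f_inv_f)
qed

lemma bij_group_id: "bij_group H \<Longrightarrow> id \<in> H"
  by (simp add: bij_group_def)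

lemma bij_group_comp: "bij_group H \<Longrightarrow> g \<in> H \<Longrightarrow> h \<in> H \<Longrightarrow> g \<circ> h \<in> H"
  by (simp add: bij_group_def)

lemma bij_group_inv: "bij_group H \<Longrightarrow> g \<in> H \<Longrightarrow> inv g \<in> H"
  by (simp add: bij_group_def)

lemma bij_group_bij: "bij_group H \<Longrightarrow> g \<in> H \<Longrightarrow> bij g"
  by (simp add: bij_group_def)

lemma is_subgroup_bij_group: "is_subgroup H \<Longrightarrow> bij_group H"
  by (auto simp: is_subgroup_def bij_group_def GammaL_def)

lemma lcoset_eq_iff:
  assumes H: "bij_group H" and a: "bij a" and b: "bij b"
  shows "lcoset a H = lcoset b H \<longleftrightarrow> inv a \<circ> b \<in> H"
proof
  assume "lcoset a H = lcoset b H"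
  then have "b \<in> lcoset a H"
    using bij_group_id[OF H] unfolding lcoset_def by (metis comp_id image_eqI)
  then show "inv a \<circ> b \<in> H"
    using a by (auto simp: lcoset_def o_assoc bij_is_inj)
next
  assume ab: "inv a \<circ> b \<in> H"
  have "lcoset b H \<subseteq> lcoset a H" if "inv a \<circ> b \<in> H" "bij a" "bij b" for a b
  proof
    fix x
    assume "x \<in> lcoset b H"
    then obtain h where "h \<in> H" "x = b \<circ> h"
      by (auto simp: lcoset_def)
    then have "x = a \<circ> ((inv a \<circ> b) \<circ> h)" "(inv a \<circ> b) \<circ> h \<in> H"
      using that bij_group_comp[OF H] by (simp_all add: o_assoc bij_comp_inv)
    then show "x \<in> lcoset a H"
      by (auto simp: lcoset_def)
  qed
  moreover have "inv b \<circ> a \<in> H"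
    using bij_group_inv[OF H ab] a b by (simp add: o_inv_distrib bij_imp_bij_inv inv_inv_eq)
  ultimately show "lcoset a H = lcoset b H"
    using ab a b by blast
qed

lemma card_eq_card_image_mult:
  assumes "finite A" "\<And>y. y \<in> f ` A \<Longrightarrow> card {x\<in>A. f x = y} = k"
  shows "card A = card (f ` A) * k"
proof -
  have "card A = card (\<Union>y\<in>f ` A. {x\<in>A. f x = y})"
    by (rule arg_cong[where f = card]) auto
  also have "\<dots> = (\<Sum>y\<in>f ` A. card {x\<in>A. f x = y})"
    by (rule card_UN_disjoint) (use assms(1) in auto)
  also have "\<dots> = card (f ` A) * k"
    using assms(2) by simp
  finally show ?thesis .
qed

lemma card_eq_card_image_mult_card_kernel:
  assumes H: "bij_group H" "finite H"
    and hom: "\<And>x y. x \<in> H \<Longrightarrow> y \<in> H \<Longrightarrow> f (x \<circ> y) = mul (f x) (f y)"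
    and cancel: "\<And>a b c. a \<in> f ` H \<Longrightarrow> mul a b = mul a c \<Longrightarrow> b = c"
  shows "card H = card (f ` H) * card {k\<in>H. f k = f id}"
proof (rule card_eq_card_image_mult[OF H(2)])
  fix y
  assume "y \<in> f ` H"
  then obtain h where h: "h \<in> H" "y = f h"
    by auto
  have "bij h"
    using bij_group_bij[OF H(1) h(1)] .
  have fh: "f h = mul (f h) (f id)"
    using hom[OF h(1) bij_group_id[OF H(1)]] by simp
  have "{x\<in>H. f x = y} = (\<lambda>k. h \<circ> k) ` {k\<in>H. f k = f id}"
  proof (intro equalityI subsetI)
    fix x
    assume x: "x \<in> {x\<in>H. f x = y}"
    define k where "k = inv h \<circ> x"
    have kH: "k \<in> H"
      unfolding k_def using x bij_group_comp[OF H(1) bij_group_inv[OF H(1) h(1)]] by auto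
    have xk: "x = h \<circ> k"
      unfolding k_def using \<open>bij h\<close> by (simp add: o_assoc bij_comp_inv)
    have "mul (f h) (f k) = mul (f h) (f id)"
      using hom[OF h(1) kH] xk x h(2) fh by auto
    then have "f k = f id"
      using cancel h(1) by blast
    then show "x \<in> (\<lambda>k. h \<circ> k) ` {k\<in>H. f k = f id}"
      using kH xk by auto
  next
    fix x
    assume "x \<in> (\<lambda>k. h \<circ> k) ` {k\<in>H. f k = f id}"
    then show "x \<in> {x\<in>H. f x = y}"
      using hom[OF h(1)] fh h(2) bij_group_comp[OF H(1) h(1)] by auto
  qed
  moreover have "inj_on (\<lambda>k. h \<circ> k) {k\<in>H. f k = f id}"
    by (rule inj_on_inverseI[where g = "\<lambda>k. inv h \<circ> k"])
      (use \<open>bij h\<close> in \<open>simp add: o_assoc bij_is_inj\<close>)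
  ultimately show "card {x\<in>H. f x = y} = card {k\<in>H. f k = f id}"
    by (simp add: card_image)
qed

definition aut_of :: "('a::field, 'n::finite) vmap \<Rightarrow> ('a \<Rightarrow> 'a)" where
  "aut_of g = (SOME s. field_aut s \<and> semilinear s g)"

lemma GammaL_bij: "g \<in> GammaL \<Longrightarrow> bij g"
  by (simp add: GammaL_def)

lemma aut_of:
  assumes "g \<in> GammaL"
  shows "field_aut (aut_of g)" "semilinear (aut_of g) g"
proof -
  have "\<exists>s. field_aut s \<and> semilinear s g"
    using assms by (auto simp: GammaL_def)
  then have "field_aut (aut_of g) \<and> semilinear (aut_of g) g"
    unfolding aut_of_def by (rule someI_ex)
  then show "field_aut (aut_of g)" "semilinear (aut_of g) g"
    by auto
qed

lemma aut_of_eq: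
  assumes "g \<in> GammaL" "semilinear s g"
  shows "aut_of g = s"
proof -
  have "g (std_basis undefined) \<noteq> 0"
    using semilinear_zero[OF assms(2)] bij_is_inj[OF GammaL_bij[OF assms(1)]] std_basis_nonzero
    by (metis injD)
  then show ?thesis
    using semilinear_aut_unique[OF aut_of(2)[OF assms(1)] assms(2)] by blast
qed

lemma GammaL_comp:
  assumes "g \<in> GammaL" "h \<in> GammaL"
  shows "g \<circ> h \<in> GammaL" "aut_of (g \<circ> h) = aut_of g \<circ> aut_of h"
proof -
  have sl: "semilinear (aut_of g \<circ> aut_of h) (g \<circ> h)"
    using semilinear_comp aut_of(2) assms by blast
  have "field_aut (aut_of g \<circ> aut_of h)"
    using field_aut_comp aut_of(1) assms by blast
  then show gh: "g \<circ> h \<in> GammaL"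
    using sl assms GammaL_bij bij_comp unfolding GammaL_def by blast
  show "aut_of (g \<circ> h) = aut_of g \<circ> aut_of h"
    using aut_of_eq[OF gh sl] .
qed

lemma GL_subset_GammaL: "GL \<subseteq> GammaL"
  by (auto simp: GL_def GammaL_def intro: field_aut_id)

lemma GL_iff_aut_of: "g \<in> GammaL \<Longrightarrow> g \<in> GL \<longleftrightarrow> aut_of g = id"
  using aut_of_eq[of g id] aut_of(2)[of g] GammaL_bij[of g] by (auto simp: GL_def)

lemma aut_of_id: "aut_of (id :: ('a::field,'n::finite) vmap) = id"
  using GL_iff_aut_of[of id] GL_subset_GammaL id_SL SL_GL by blast

lemma aut_of_inv:
  assumes "g \<in> GammaL" "inv g \<in> GammaL"
  shows "aut_of (inv g) \<circ> aut_of g = id"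
  by (metis GammaL_comp(2)[OF assms(2,1)] inv_o_cancel bij_is_inj GammaL_bij assms(1) aut_of_id)

section \<open>Subgroups of the multiplicative group of a finite field\<close>

definition mult_subgroup :: "'a::field set \<Rightarrow> bool" where
  "mult_subgroup S \<longleftrightarrow> 1 \<in> S \<and> (\<forall>x\<in>S. \<forall>y\<in>S. x * y \<in> S) \<and> 0 \<notin> S"

lemma mult_subgroup_power: "mult_subgroup S \<Longrightarrow> x \<in> S \<Longrightarrow> x ^ k \<in> S"
  by (induction k) (auto simp: mult_subgroup_def)

locale field_generator =
  fixes mu :: "'a::{field,finite}"
  assumes generates: "\<forall>x. x \<noteq> 0 \<longrightarrow> (\<exists>k. x = mu ^ k)"
    and nonzero: "mu \<noteq> 0"
begin

lemma power_diff_eq_1: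
  assumes "i \<le> j" "mu ^ i = mu ^ j"
  shows "mu ^ (j - i) = 1"
proof -
  have "mu ^ i * mu ^ (j - i) = mu ^ i * 1"
    using assms by (metis le_add_diff_inverse power_add mult_1_right)
  then show ?thesis
    using nonzero by simp
qed

definition ord :: nat where
  "ord = (LEAST k. 0 < k \<and> mu ^ k = 1)"

lemma ex_power_eq_1: "\<exists>k. 0 < k \<and> mu ^ k = 1"
proof -
  have "\<not> inj (\<lambda>k::nat. mu ^ k)"
  proof
    assume "inj (\<lambda>k::nat. mu ^ k)"
    then have "infinite (range (\<lambda>k::nat. mu ^ k))"
      using finite_imageD by blast
    then show False
      by simp
  qed
  then obtain i j :: nat where "i < j" "mu ^ i = mu ^ j"
    unfolding inj_def by (metis linorder_neqE_nat)
  then show ?thesis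
    using power_diff_eq_1[of i j] by (intro exI[of _ "j - i"]) simp
qed

lemma ord: "0 < ord" "mu ^ ord = 1"
  using LeastI_ex[OF ex_power_eq_1] unfolding ord_def by auto

lemma power_neq_1_below_ord: "0 < k \<Longrightarrow> k < ord \<Longrightarrow> mu ^ k \<noteq> 1"
  unfolding ord_def using not_less_Least by blast

lemma power_eq_1_iff: "mu ^ k = 1 \<longleftrightarrow> ord dvd k"
proof
  assume k: "mu ^ k = 1"
  have "mu ^ k = mu ^ (ord * (k div ord) + k mod ord)"
    by simp
  also have "\<dots> = (mu ^ ord) ^ (k div ord) * mu ^ (k mod ord)"
    by (simp only: power_add power_mult)
  finally have "mu ^ (k mod ord) = 1"
    using k ord by simp
  then have "k mod ord = 0"
    using power_neq_1_below_ord[of "k mod ord"] ord(1) by (metis mod_less_divisor neq0_conv)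
  then show "ord dvd k"
    by auto
next
  assume "ord dvd k"
  then show "mu ^ k = 1"
    using ord by (auto simp: power_mult)
qed

lemma power_mult_power_inverse: "mu ^ k * mu ^ (k * (ord - 1)) = 1"
proof -
  have "mu ^ k * mu ^ (k * (ord - 1)) = mu ^ (k * ord)"
    using ord(1) by (simp add: power_add[symmetric]) (metis Suc_pred mult_Suc_right)
  then show ?thesis
    by (simp add: power_mult[symmetric] ord(2)) (metis ord(2) power_mult power_one mult.commute)
qed

lemma dvd_of_power_eq:
  assumes "mu ^ k = mu ^ l" "g dvd ord" "g dvd l"
  shows "g dvd k"
proof (cases "k \<le> l")
  case True
  then have "g dvd l - k"
    using power_diff_eq_1[of k l] assms power_eq_1_iff dvd_trans by blast
  then show ?thesis
    using assms(3) True by (metis dvd_diff_nat diff_diff_cancel)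
next
  case False
  then have "g dvd k - l"
    using power_diff_eq_1[of l k] assms power_eq_1_iff dvd_trans by fastforce
  then show ?thesis
    using assms(3) False by (metis dvd_add le_add_diff_inverse nat_le_linear)
qed

lemma power_inj: "i < ord \<Longrightarrow> j < ord \<Longrightarrow> mu ^ i = mu ^ j \<Longrightarrow> i = j"
proof -
  have "False" if "i < j" "j < ord" "mu ^ i = mu ^ j" for i j
    using power_diff_eq_1[of i j] power_neq_1_below_ord[of "j - i"] that by simp
  then show "i < ord \<Longrightarrow> j < ord \<Longrightarrow> mu ^ i = mu ^ j \<Longrightarrow> i = j"
    by (metis linorder_neqE_nat)
qed

text \<open>A subgroup \<open>S\<close> is generated by \<open>mu ^ exponent S\<close>.\<close>
definition exponent :: "'a set \<Rightarrow> nat" where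
  "exponent S = (LEAST d. 0 < d \<and> mu ^ d \<in> S)"

lemma exponent:
  assumes "mult_subgroup S"
  shows "0 < exponent S" "mu ^ exponent S \<in> S"
proof -
  have "\<exists>d. 0 < d \<and> mu ^ d \<in> S"
    using ord assms by (auto simp: mult_subgroup_def)
  then show "0 < exponent S" "mu ^ exponent S \<in> S"
    using LeastI_ex unfolding exponent_def by (metis (mono_tags, lifting))+
qed

lemma exponent_least: "0 < k \<Longrightarrow> k < exponent S \<Longrightarrow> mu ^ k \<notin> S"
  unfolding exponent_def using not_less_Least by blast

lemma mult_subgroup_elem_power:
  assumes "mult_subgroup S" "x \<in> S"
  shows "\<exists>k. x = mu ^ k"
proof -
  have "x \<noteq> 0"
    using assms unfolding mult_subgroup_def by blast
  then show ?thesis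
    using generates by blast
qed

lemma power_mem_iff:
  assumes S: "mult_subgroup S"
  shows "mu ^ k \<in> S \<longleftrightarrow> exponent S dvd k"
proof
  assume k: "mu ^ k \<in> S"
  define d q r where "d = exponent S" and "q = k div d" and "r = k mod d"
  have kd: "k = d * q + r"
    unfolding q_def r_def by simp
  have a: "mu ^ (d * q * (ord - 1)) \<in> S"
    using mult_subgroup_power[OF S exponent(2)[OF S]] unfolding d_def by (metis power_mult)
  have "mu ^ r = mu ^ r * (mu ^ (d * q) * mu ^ (d * q * (ord - 1)))"
    using power_mult_power_inverse by simp
  also have "\<dots> = mu ^ k * mu ^ (d * q * (ord - 1))"
    by (simp add: kd power_add mult_ac)
  finally have "mu ^ r \<in> S"
    using k a S by (auto simp: mult_subgroup_def)
  moreover have "r < d"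
    unfolding r_def d_def using exponent(1)[OF S] by simp
  ultimately have "r = 0"
    unfolding d_def using exponent_least by blast
  then show "exponent S dvd k"
    unfolding d_def r_def by (simp add: dvd_eq_mod_eq_0)
next
  assume "exponent S dvd k"
  then show "mu ^ k \<in> S"
    using mult_subgroup_power[OF S exponent(2)[OF S]] by (auto simp: power_mult)
qed

lemma exponent_dvd_ord: "mult_subgroup S \<Longrightarrow> exponent S dvd ord"
  using power_mem_iff[of S ord] ord by (auto simp: mult_subgroup_def)

lemma exponent_dvd_of_subset:
  assumes "mult_subgroup S" "mult_subgroup T" "S \<subseteq> T"
  shows "exponent T dvd exponent S"
  using power_mem_iff[OF assms(2)] exponent(2)[OF assms(1)] assms(3) by auto

lemma mult_subgroup_eq_image:
  assumes S: "mult_subgroup S" and r: "ord = exponent S * r"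
  shows "S = (\<lambda>j. mu ^ (exponent S * j)) ` {..< r}"
proof
  define d where "d = exponent S"
  show "S \<subseteq> (\<lambda>j. mu ^ (exponent S * j)) ` {..< r}"
  proof
    fix x
    assume x: "x \<in> S"
    then obtain k where k: "x = mu ^ k"
      using mult_subgroup_elem_power[OF S] by blast
    then obtain j where j: "k = d * j"
      using power_mem_iff[OF S] x d_def by auto
    have "mu ^ (d * j) = mu ^ (ord * (j div r)) * mu ^ (d * (j mod r))"
      by (simp add: r d_def power_add[symmetric])
        (metis add_mult_distrib2 div_mult_mod_eq mult.assoc mult.commute)
    also have "\<dots> = mu ^ (d * (j mod r))"
      by (simp add: power_mult ord(2))
    finally have "x = mu ^ (d * (j mod r))"
      using k j by simp
    moreover have "j mod r < r"
      using r ord(1) by (metis mod_less_divisor mult_0_right neq0_conv)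
    ultimately show "x \<in> (\<lambda>j. mu ^ (exponent S * j)) ` {..< r}"
      unfolding d_def by auto
  qed
  show "(\<lambda>j. mu ^ (exponent S * j)) ` {..< r} \<subseteq> S"
  proof clarify
    fix j
    show "mu ^ (exponent S * j) \<in> S"
      using power_mem_iff[OF S, of "exponent S * j"] by simp
  qed
qed

lemma card_mult_subgroup:
  assumes S: "mult_subgroup S"
  shows "card S = ord div exponent S"
proof -
  define d where "d = exponent S"
  have d: "0 < d"
    using exponent(1)[OF S] d_def by simp
  obtain r where r: "ord = d * r"
    using exponent_dvd_ord[OF S] d_def by auto
  have "inj_on (\<lambda>j. mu ^ (d * j)) {..< r}"
  proof (rule inj_onI)
    fix i j
    assume "i \<in> {..<r}" "j \<in> {..<r}" "mu ^ (d * i) = mu ^ (d * j)"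
    moreover have "d * i < ord" "d * j < ord"
      using calculation(1,2) r d by auto
    ultimately have "d * i = d * j"
      using power_inj by blast
    then show "i = j"
      using d by simp
  qed
  then have "card ((\<lambda>j. mu ^ (exponent S * j)) ` {..< r}) = r"
    unfolding d_def by (simp add: card_image)
  then have "card S = r"
    using mult_subgroup_eq_image[OF S r[unfolded d_def]] by argo
  then show ?thesis
    using r d d_def by simp
qed

lemma power_mem_set_times_iff:
  assumes P: "mult_subgroup P" and K: "mult_subgroup K"
  shows "mu ^ k \<in> P * K \<longleftrightarrow> gcd (exponent P) (exponent K) dvd k"
proof
  assume "mu ^ k \<in> P * K"
  then obtain p q where pq: "p \<in> P" "q \<in> K" "mu ^ k = p * q"
    by (auto elim: set_times_elim)
  then obtain i j where ij: "p = mu ^ i" "q = mu ^ j"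
    using mult_subgroup_elem_power[OF P] mult_subgroup_elem_power[OF K] by metis
  have "exponent P dvd i" "exponent K dvd j"
    using power_mem_iff[OF P] power_mem_iff[OF K] pq ij by auto
  then have "gcd (exponent P) (exponent K) dvd i + j"
    by (meson dvd_add gcd_dvd1 gcd_dvd2 dvd_trans)
  moreover have "mu ^ k = mu ^ (i + j)"
    using pq ij by (simp add: power_add)
  moreover have "gcd (exponent P) (exponent K) dvd ord"
    using exponent_dvd_ord[OF P] by (meson gcd_dvd1 dvd_trans)
  ultimately show "gcd (exponent P) (exponent K) dvd k"
    using dvd_of_power_eq by blast
next
  assume "gcd (exponent P) (exponent K) dvd k"
  then obtain c where c: "k = gcd (exponent P) (exponent K) * c"
    by auto
  obtain a b where "exponent P * a = exponent K * b + gcd (exponent P) (exponent K)"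
    using bezout_nat[of "exponent P" "exponent K"] exponent(1)[OF P] by auto
  then have "exponent P * a * c = exponent K * b * c + k"
    using c by (metis add_mult_distrib mult.commute mult.left_commute)
  then have "mu ^ (exponent P * a * c) = mu ^ (exponent K * b * c) * mu ^ k"
    by (simp add: power_add)
  then have "mu ^ k = mu ^ (exponent P * a * c) * mu ^ (exponent K * b * c * (ord - 1))"
    using power_mult_power_inverse[of "exponent K * b * c"] by (simp add: mult_ac)
  moreover have "mu ^ (exponent P * a * c) \<in> P" "mu ^ (exponent K * b * c * (ord - 1)) \<in> K"
    using power_mem_iff[OF P] power_mem_iff[OF K] by simp_all
  ultimately show "mu ^ k \<in> P * K"
    by (simp add: set_times_intro)
qed

lemma subset_set_times_iff_gcd_dvd:
  fixes D P K :: "'a set"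
  assumes D: "mult_subgroup D" and P: "mult_subgroup P" and K: "mult_subgroup K"
  shows "D \<subseteq> P * K \<longleftrightarrow> gcd (exponent P) (exponent K) dvd exponent D"
proof
  assume "D \<subseteq> P * K"
  then show "gcd (exponent P) (exponent K) dvd exponent D"
    using exponent(2)[OF D] power_mem_set_times_iff[OF P K] by auto
next
  assume g: "gcd (exponent P) (exponent K) dvd exponent D"
  show "D \<subseteq> P * K"
  proof
    fix x
    assume x: "x \<in> D"
    then obtain k where k: "x = mu ^ k"
      using mult_subgroup_elem_power[OF D] by blast
    then have "exponent D dvd k"
      using power_mem_iff[OF D] x by simp
    then show "x \<in> P * K"
      using g dvd_trans power_mem_set_times_iff[OF P K] k by metis
  qed
qed

lemma exponent_eq_mult_index:
  fixes D S :: "'a set"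
  assumes D: "mult_subgroup D" and S: "mult_subgroup S" and "S \<subseteq> D"
  shows "exponent S = exponent D * (card D div card S)"
proof -
  obtain a where a: "exponent S = exponent D * a"
    using exponent_dvd_of_subset[OF S D \<open>S \<subseteq> D\<close>] by auto
  obtain r where r: "ord = exponent S * r"
    using exponent_dvd_ord[OF S] by blast
  have "0 < r"
    using r ord(1) by (auto intro!: Nat.gr0I)
  moreover have "card S = r"
    using card_mult_subgroup[OF S] exponent(1)[OF S] r by simp
  moreover have "card D = a * r"
    using card_mult_subgroup[OF D] exponent(1)[OF D] r a by simp
  ultimately show ?thesis
    using a by simp
qed

text \<open>Via \<open>exponent\<close>, subgroups of the cyclic group \<open>D\<close> correspond to divisors of \<open>|D|\<close>,
  and \<open>P * K\<close> corresponds to the gcd of the exponents.\<close>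
theorem subset_set_times_iff_coprime:
  fixes D P K :: "'a set"
  assumes D: "mult_subgroup D" and P: "mult_subgroup P" and K: "mult_subgroup K"
    and "P \<subseteq> D" "K \<subseteq> D"
  shows "D \<subseteq> P * K \<longleftrightarrow> coprime (card D div card K) (card D div card P)"
proof -
  have "gcd (exponent P) (exponent K) = exponent D * gcd (card D div card P) (card D div card K)"
    using exponent_eq_mult_index[OF D P \<open>P \<subseteq> D\<close>] exponent_eq_mult_index[OF D K \<open>K \<subseteq> D\<close>]
    by (simp add: gcd_mult_distrib_nat)
  then have "gcd (exponent P) (exponent K) dvd exponent D
      \<longleftrightarrow> gcd (card D div card P) (card D div card K) dvd 1"
    using exponent(1)[OF D] by simp
  then show ?thesis
    using subset_set_times_iff_gcd_dvd[OF D P K] by (simp add: coprime_iff_gcd_eq_1 gcd.commute)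
qed

end

lemma mult_subgroup_coset_self:
  assumes P: "mult_subgroup P" "\<And>x. x \<in> P \<Longrightarrow> inverse x \<in> P" and p: "p \<in> P"
  shows "(\<lambda>y. p * y) ` P = P"
proof
  show "(\<lambda>y. p * y) ` P \<subseteq> P"
    using P(1) p by (auto simp: mult_subgroup_def)
  have "p \<noteq> 0"
    using P(1) p by (auto simp: mult_subgroup_def)
  then have "y = p * (inverse p * y)" "inverse p * y \<in> P" if "y \<in> P" for y
    using P p that by (auto simp: mult_subgroup_def)
  then show "P \<subseteq> (\<lambda>y. p * y) ` P"
    by blast
qed

lemma card_cosets:
  assumes P: "mult_subgroup P" "\<And>x. x \<in> P \<Longrightarrow> inverse x \<in> P"
    and D: "mult_subgroup D" "finite D" and "P \<subseteq> D"
  shows "card ((\<lambda>\<delta>. (\<lambda>y. \<delta> * y) ` P) ` D) = card D div card P"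
proof -
  have "card P > 0"
    using P(1) D(2) \<open>P \<subseteq> D\<close> finite_subset by (auto simp: mult_subgroup_def card_gt_0_iff)
  moreover have "card D = card ((\<lambda>\<delta>. (\<lambda>y. \<delta> * y) ` P) ` D) * card P"
  proof (rule card_eq_card_image_mult[OF D(2)])
    fix Y
    assume "Y \<in> (\<lambda>\<delta>. (\<lambda>y. \<delta> * y) ` P) ` D"
    then obtain d where d: "d \<in> D" "Y = (\<lambda>y. d * y) ` P"
      by auto
    have "{x \<in> D. (\<lambda>y. x * y) ` P = Y} = (\<lambda>y. d * y) ` P"
    proof (intro equalityI subsetI)
      fix x
      assume "x \<in> {x \<in> D. (\<lambda>y. x * y) ` P = Y}"
      then have "x * 1 \<in> Y"
        using P(1) by (auto simp: mult_subgroup_def)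
      then show "x \<in> (\<lambda>y. d * y) ` P"
        using d by simp
    next
      fix x
      assume "x \<in> (\<lambda>y. d * y) ` P"
      then obtain p where p: "p \<in> P" "x = d * p"
        by auto
      have "(\<lambda>y. x * y) ` P = (\<lambda>y. d * y) ` ((\<lambda>y. p * y) ` P)"
        using p by (auto simp: image_image mult.assoc)
      moreover have "x \<in> D"
        using p d D(1) \<open>P \<subseteq> D\<close> by (auto simp: mult_subgroup_def)
      ultimately show "x \<in> {x \<in> D. (\<lambda>y. x * y) ` P = Y}"
        using mult_subgroup_coset_self[OF P p(1)] d by simp
    qed
    moreover have "inj_on (\<lambda>y. d * y) P"
      using d D(1) by (auto simp: inj_on_def mult_subgroup_def)
    ultimately show "card {x \<in> D. (\<lambda>y. x * y) ` P = Y} = card P"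
      by (simp add: card_image)
  qed
  ultimately show ?thesis
    by simp
qed

section \<open>The stabilizer of the line \<open>\<alpha>\<^sub>0\<close>\<close>

lemma line0_iff: "x \<in> line0 i0 \<longleftrightarrow> x = (x $ i0) *s std_basis i0"
  by (auto simp: line0_def std_basis_nth)

lemma line0_I: "c *s std_basis i0 \<in> line0 i0"
  by (auto simp: line0_def)

lemma notin_line0_coord:
  assumes "v \<notin> line0 i0"
  shows "\<exists>j. j \<noteq> i0 \<and> v $ j \<noteq> 0"
proof (rule ccontr)
  assume "\<not> (\<exists>j. j \<noteq> i0 \<and> v $ j \<noteq> 0)"
  then have "v = (v $ i0) *s std_basis i0"
    by (auto simp: vec_eq_iff std_basis_nth)
  then show False
    using assms line0_I by metis
qed

lemma semilinear_image_line0: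
  fixes g :: "('a::field, 'n::finite) vmap"
  assumes s: "field_aut s" "semilinear s g"
    and ga: "g (std_basis i0) = a *s std_basis i0" and a: "a \<noteq> 0"
  shows "g ` line0 i0 = line0 i0"
proof
  show "g ` line0 i0 \<subseteq> line0 i0"
  proof
    fix y
    assume "y \<in> g ` line0 i0"
    then obtain c where "y = g (c *s std_basis i0)"
      by (auto simp: line0_def)
    then have "y = (s c * a) *s std_basis i0"
      using semilinear_scale[OF s(2)] ga by simp
    then show "y \<in> line0 i0"
      using line0_I by blast
  qed
  show "line0 i0 \<subseteq> g ` line0 i0"
  proof
    fix y :: "'a^'n"
    assume "y \<in> line0 i0"
    then obtain d where y: "y = d *s std_basis i0"
      by (auto simp: line0_def)
    have "s (inv s (d / a)) = d / a"
      using field_aut_bij[OF s(1)] by (simp add: bij_is_surj surj_f_inv_f)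
    then have "g (inv s (d / a) *s std_basis i0) = y"
      using semilinear_scale[OF s(2)] ga y a by simp
    then show "y \<in> g ` line0 i0"
      using line0_I by (metis image_eqI)
  qed
qed

locale ZSL_overgroup =
  fixes G :: "('a::{field,finite}, 'n::finite) vmap set" and i0 :: 'n
  assumes G_subgroup: "is_subgroup G" and ZSL_subset_G: "setprod Zsc SL \<subseteq> G"
    and card_index_ge_3: "CARD('n) \<ge> 3"
begin

abbreviation "e \<equiv> (std_basis :: 'n \<Rightarrow> 'a^'n)"
abbreviation "B \<equiv> stab0 i0 G"

lemma bij_group_G: "bij_group G"
  using is_subgroup_bij_group[OF G_subgroup] .

lemma G_comp: "g \<in> G \<Longrightarrow> h \<in> G \<Longrightarrow> g \<circ> h \<in> G"
  using bij_group_comp[OF bij_group_G] .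

lemma G_inv: "g \<in> G \<Longrightarrow> inv g \<in> G"
  using bij_group_inv[OF bij_group_G] .

lemma G_id: "id \<in> G"
  using bij_group_id[OF bij_group_G] .

lemma G_bij: "g \<in> G \<Longrightarrow> bij g"
  using bij_group_bij[OF bij_group_G] .

lemma G_GammaL: "g \<in> G \<Longrightarrow> g \<in> GammaL"
  using G_subgroup by (auto simp: is_subgroup_def)

lemma G_aut_of: "g \<in> G \<Longrightarrow> field_aut (aut_of g)" "g \<in> G \<Longrightarrow> semilinear (aut_of g) g"
  using aut_of G_GammaL by blast+

lemma aut_of_comp_G: "g \<in> G \<Longrightarrow> h \<in> G \<Longrightarrow> aut_of (g \<circ> h) = aut_of g \<circ> aut_of h"
  using GammaL_comp(2) G_GammaL by blast

lemma aut_of_inv_G: "g \<in> G \<Longrightarrow> aut_of (inv g) \<circ> aut_of g = id"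
  using aut_of_inv G_GammaL G_inv by blast

lemma aut_of_G_inv: "g \<in> G \<Longrightarrow> aut_of g \<circ> aut_of (inv g) = id"
  using aut_of_inv_G[of "inv g"] G_inv G_bij by (simp add: inv_inv_eq)

lemma G_GL_iff: "g \<in> G \<Longrightarrow> g \<in> GL \<longleftrightarrow> aut_of g = id"
  using GL_iff_aut_of G_GammaL by blast

lemma inv_apply_G: "g \<in> G \<Longrightarrow> g (inv g y) = y"
  using G_bij by (simp add: bij_is_surj surj_f_inv_f)

lemma inv_G_apply: "g \<in> G \<Longrightarrow> inv g (g y) = y"
  using G_bij by (simp add: bij_is_inj)

lemma inv_G_eq: "g \<in> G \<Longrightarrow> g x = y \<Longrightarrow> inv g y = x"
  using inv_G_apply by blast

lemma G_nonzero: "g \<in> G \<Longrightarrow> x \<noteq> 0 \<Longrightarrow> g x \<noteq> 0"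
  using G_bij semilinear_zero[OF G_aut_of(2)] by (metis bij_is_inj injD)

lemma Zsc_subset_G: "Zsc \<subseteq> G"
proof
  fix z :: "('a, 'n) vmap"
  assume "z \<in> Zsc"
  then have "z \<circ> id \<in> setprod Zsc SL"
    using id_SL unfolding setprod_def by blast
  then show "z \<in> G"
    using ZSL_subset_G by auto
qed

lemma SL_subset_G: "SL \<subseteq> G"
proof -
  have "id \<in> Zsc"
    using scalar_map_Zsc[of 1] by (simp add: scalar_map_def id_def)
  then have "id \<circ> g \<in> setprod Zsc SL" if "g \<in> SL" for g :: "('a, 'n) vmap"
    using that unfolding setprod_def by blast
  then show ?thesis
    using ZSL_subset_G by auto
qed

lemma scalar_map_G: "c \<noteq> 0 \<Longrightarrow> scalar_map c \<in> G"
  using Zsc_subset_G scalar_map_Zsc by blast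

lemma GL_inv_G: "g \<in> G \<Longrightarrow> g \<in> GL \<Longrightarrow> inv g \<in> GL"
  using G_GL_iff[of g] G_GL_iff[OF G_inv, of g] aut_of_inv_G[of g] by simp

lemma gdet_inv: "g \<in> G \<Longrightarrow> g \<in> GL \<Longrightarrow> gdet g * gdet (inv g) = 1"
  using gdet_comp_linear[OF GL_linear, of g "inv g"] bij_comp_inv[OF G_bij] gdet_id by metis

lemma gdet_nonzero: "g \<in> G \<Longrightarrow> g \<in> GL \<Longrightarrow> gdet g \<noteq> 0"
  using gdet_inv by force

lemma gdet_comp_G: "g \<in> G \<Longrightarrow> gdet (g \<circ> h) = gdet g * aut_of g (gdet h)"
  using gdet_comp G_aut_of by blast

definition i1 :: 'n where "i1 = (SOME i. i \<noteq> i0)"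
definition i2 :: 'n where "i2 = (SOME i. i \<noteq> i0 \<and> i \<noteq> i1)"

lemma ex_index_other: "\<exists>i::'n. i \<noteq> a \<and> i \<noteq> b"
proof -
  have "card {a, b} \<le> 2"
    by (cases "a = b") auto
  then have "card {a, b} < CARD('n)"
    using card_index_ge_3 by linarith
  then have "{a, b} \<noteq> UNIV"
    by auto
  then show ?thesis
    by auto
qed

lemma i1: "i1 \<noteq> i0"
  unfolding i1_def using ex_index_other[of i0 i0] by (metis (mono_tags, lifting) someI_ex)

lemma i2: "i2 \<noteq> i0" "i2 \<noteq> i1"
  unfolding i2_def using ex_index_other[of i0 i1] by (metis (mono_tags, lifting) someI_ex)+

lemma B_G: "g \<in> B \<Longrightarrow> g \<in> G"
  by (simp add: stab0_def)

lemma B_iff: "g \<in> G \<Longrightarrow> g \<in> B \<longleftrightarrow> g (e i0) \<in> line0 i0"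
proof
  assume "g \<in> B"
  then show "g (e i0) \<in> line0 i0"
    using line0_I[of 1 i0] by (auto simp: stab0_def)
next
  assume g: "g \<in> G" and ge: "g (e i0) \<in> line0 i0"
  define a where "a = g (e i0) $ i0"
  have ga: "g (e i0) = a *s e i0"
    using ge line0_iff a_def by blast
  then have "a \<noteq> 0"
    using G_nonzero[OF g std_basis_nonzero[of i0]] by auto
  then have "g ` line0 i0 = line0 i0"
    using semilinear_image_line0[OF G_aut_of[OF g] ga] by blast
  then show "g \<in> B"
    using g by (simp add: stab0_def)
qed

lemma bij_group_B: "bij_group B"
proof -
  have "id \<in> B"
    using G_id by (simp add: stab0_def)
  moreover have "\<forall>g\<in>B. \<forall>h\<in>B. g \<circ> h \<in> B"
  proof (intro ballI)
    fix g h
    assume g: "g \<in> B" and h: "h \<in> B"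
    have "(g \<circ> h) ` line0 i0 = g ` (h ` line0 i0)"
      by (simp add: image_comp)
    also have "\<dots> = line0 i0"
      using g h by (simp add: stab0_def)
    finally show "g \<circ> h \<in> B"
      using G_comp[OF B_G[OF g] B_G[OF h]] unfolding stab0_def by blast
  qed
  moreover have "\<forall>g\<in>B. inv g \<in> B"
  proof
    fix g
    assume g: "g \<in> B"
    then have "inv g ` line0 i0 = inv g ` (g ` line0 i0)"
      by (simp add: stab0_def)
    also have "\<dots> = line0 i0"
      using G_bij[OF B_G[OF g]] by (simp add: image_comp bij_is_inj)
    finally show "inv g \<in> B"
      using G_inv[OF B_G[OF g]] unfolding stab0_def by blast
  qed
  moreover have "\<forall>g\<in>B. bij g"
    using G_bij B_G by blast
  ultimately show ?thesis
    by (simp add: bij_group_def)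
qed

lemma B_comp: "g \<in> B \<Longrightarrow> h \<in> B \<Longrightarrow> g \<circ> h \<in> B"
  using bij_group_comp[OF bij_group_B] .

lemma B_inv: "g \<in> B \<Longrightarrow> inv g \<in> B"
  using bij_group_inv[OF bij_group_B] .

lemma B_scaled_e0: "g \<in> G \<Longrightarrow> g (e i0) = c *s e i0 \<Longrightarrow> g \<in> B"
  using B_iff line0_I by simp

lemma SL_fixing_e0_B:
  assumes "m \<in> SL" "m (e i0) = e i0"
  shows "m \<in> B"
proof -
  have "m \<in> G"
    using assms(1) SL_subset_G by blast
  then show ?thesis
    using B_scaled_e0[of m 1] assms(2) by simp
qed

section \<open>The reduced determinant\<close>

definition eig0 :: "('a, 'n) vmap \<Rightarrow> 'a" where
  "eig0 g = g (e i0) $ i0"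

lemma eig0: "g \<in> B \<Longrightarrow> g (e i0) = eig0 g *s e i0" "g \<in> B \<Longrightarrow> eig0 g \<noteq> 0"
proof -
  assume g: "g \<in> B"
  then have "g (e i0) \<in> line0 i0"
    using B_iff[OF B_G[OF g]] by blast
  then show ge: "g (e i0) = eig0 g *s e i0"
    using line0_iff unfolding eig0_def by blast
  show "eig0 g \<noteq> 0"
    using G_nonzero[OF B_G[OF g] std_basis_nonzero[of i0]] ge by auto
qed

lemma eig0_comp: "g \<in> B \<Longrightarrow> h \<in> B \<Longrightarrow> eig0 (g \<circ> h) = eig0 g * aut_of g (eig0 h)"
proof -
  assume g: "g \<in> B" and h: "h \<in> B"
  have "(g \<circ> h) (e i0) = (aut_of g (eig0 h) * eig0 g) *s e i0"
    using eig0(1)[OF g] eig0(1)[OF h] semilinear_scale[OF G_aut_of(2)[OF B_G[OF g]]] by simp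
  then show ?thesis
    unfolding eig0_def by (simp add: std_basis_nth mult.commute)
qed

text \<open>The scalars \<open>Z\<close> have reduced determinant \<open>1\<close>, so it measures the determinant modulo
  \<open>(n + 1)\<close>-th powers in a way that is multiplicative on \<open>B \<inter> GL\<close>.\<close>
definition reduced_det :: "('a, 'n) vmap \<Rightarrow> 'a" where
  "reduced_det g = gdet g / eig0 g ^ CARD('n)"

lemma reduced_det_comp:
  assumes g: "g \<in> B" and h: "h \<in> B"
  shows "reduced_det (g \<circ> h) = reduced_det g * aut_of g (reduced_det h)"
proof -
  have s: "field_aut (aut_of g)"
    using G_aut_of B_G g by blast
  have "reduced_det (g \<circ> h)
      = gdet g * aut_of g (gdet h) / (eig0 g * aut_of g (eig0 h)) ^ CARD('n)"
    unfolding reduced_det_def using gdet_comp_G[OF B_G[OF g]] eig0_comp[OF g h] by simp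
  also have "\<dots> = (gdet g / eig0 g ^ CARD('n)) * (aut_of g (gdet h) / aut_of g (eig0 h) ^ CARD('n))"
    by (simp add: power_mult_distrib)
  also have "\<dots> = reduced_det g * aut_of g (reduced_det h)"
    unfolding reduced_det_def by (simp add: field_aut_divide[OF s] field_aut_power[OF s])
  finally show ?thesis .
qed

lemma reduced_det_id: "reduced_det id = 1"
  by (simp add: reduced_det_def eig0_def gdet_id std_basis_nth)

lemma reduced_det_inv: "g \<in> B \<Longrightarrow> reduced_det g * aut_of g (reduced_det (inv g)) = 1"
  using reduced_det_comp[OF _ B_inv, of g] bij_comp_inv[OF G_bij[OF B_G]] reduced_det_id by metis

lemma reduced_det_nonzero: "g \<in> B \<Longrightarrow> reduced_det g \<noteq> 0"
  using reduced_det_inv by force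

lemma reduced_det_comp_GL:
  "g \<in> B \<Longrightarrow> h \<in> B \<Longrightarrow> g \<in> GL \<Longrightarrow> reduced_det (g \<circ> h) = reduced_det g * reduced_det h"
  using reduced_det_comp G_GL_iff B_G by simp

lemma reduced_det_SL_fixing_e0: "m \<in> SL \<Longrightarrow> m (e i0) = e i0 \<Longrightarrow> reduced_det m = 1"
  by (simp add: reduced_det_def eig0_def SL_gdet std_basis_nth)

lemma reduced_det_comp_inv:
  assumes w: "w \<in> B" and l: "l \<in> B" and s: "aut_of w = aut_of l"
  shows "reduced_det (w \<circ> inv l) = reduced_det w / reduced_det l" "w \<circ> inv l \<in> GL"
proof -
  have "aut_of l (reduced_det (inv l)) = 1 / reduced_det l"
    using reduced_det_inv[OF l] reduced_det_nonzero[OF l] by (simp add: field_simps)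
  then show "reduced_det (w \<circ> inv l) = reduced_det w / reduced_det l"
    using reduced_det_comp[OF w B_inv[OF l]] s by simp
  have "aut_of (w \<circ> inv l) = id"
    using aut_of_comp_G[OF B_G[OF w] G_inv[OF B_G[OF l]]] aut_of_G_inv[OF B_G[OF l]] s by simp
  then show "w \<circ> inv l \<in> GL"
    using G_GL_iff G_comp B_G G_inv w l by blast
qed


section \<open>The kernel of the reduced determinant lies in \<open>M\<close>\<close>

lemma B_line0: "g \<in> B \<Longrightarrow> x \<in> line0 i0 \<Longrightarrow> g x \<in> line0 i0"
  unfolding stab0_def by blast

lemma line0_minus:
  fixes x :: "'a^'n"
  assumes "x \<in> line0 i0"
  shows "- x \<in> line0 i0"
proof -
  obtain c where "x = c *s e i0"
    using assms by (auto simp: line0_def)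
  then have "- x = (- c) *s e i0"
    by (simp add: vec_eq_iff)
  then show ?thesis
    using line0_I by metis
qed

lemma Wgrp_inv:
  assumes w: "w \<in> Wgrp i0 G"
  shows "inv w \<in> Wgrp i0 G"
proof -
  have wG: "w \<in> G"
    using w by (simp add: Wgrp_def)
  have "inv w x = x" if "x \<in> line0 i0" for x
  proof -
    have "w x = x"
      using w that by (simp add: Wgrp_def)
    then show ?thesis
      using inv_G_eq[OF wG] by blast
  qed
  moreover have "inv w x - x \<in> line0 i0" for x
  proof -
    have "w (inv w x) - inv w x \<in> line0 i0"
      using w by (simp add: Wgrp_def)
    then have "- (w (inv w x) - inv w x) \<in> line0 i0"
      by (rule line0_minus)
    moreover have "- (w (inv w x) - inv w x) = inv w x - x"
      using inv_apply_G[OF wG, of x] by simp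
    ultimately show ?thesis
      by simp
  qed
  ultimately show ?thesis
    using G_inv[OF wG] by (simp add: Wgrp_def)
qed

lemma Wgrp_conj:
  assumes g: "g \<in> B" and w: "w \<in> Wgrp i0 G"
  shows "g \<circ> w \<circ> inv g \<in> Wgrp i0 G"
proof -
  have gG: "g \<in> G" and wG: "w \<in> G"
    using g w by (simp_all add: stab0_def Wgrp_def)
  have "g (w (inv g x)) = x" if "x \<in> line0 i0" for x
    using w B_line0[OF B_inv[OF g] that] inv_apply_G[OF gG] by (simp add: Wgrp_def)
  moreover have "g (w (inv g x)) - x \<in> line0 i0" for x
  proof -
    have "g (w (inv g x)) - x = g (w (inv g x) - inv g x)"
      using semilinear_diff[OF G_aut_of(2)[OF gG]] inv_apply_G[OF gG] by simp
    then show ?thesis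
      using w B_line0[OF g] by (simp add: Wgrp_def)
  qed
  ultimately show ?thesis
    using G_comp[OF G_comp[OF gG wG] G_inv[OF gG]] by (simp add: Wgrp_def)
qed

lemma row_transvection_Wgrp:
  assumes r: "r $ i0 = 0"
  shows "row_transvection i0 r \<in> Wgrp i0 G"
proof -
  have "row_transvection i0 r x = x" if "x \<in> line0 i0" for x
  proof -
    obtain c where x: "x = c *s e i0"
      using \<open>x \<in> line0 i0\<close> by (auto simp: line0_def)
    have "(\<Sum>k\<in>UNIV. r$k * x$k) = 0"
      using r by (intro sum.neutral ballI) (simp add: x std_basis_nth)
    then show ?thesis
      by (simp add: row_transvection_def)
  qed
  moreover have "row_transvection i0 r x - x \<in> line0 i0" for x
    using line0_I by (simp add: row_transvection_def)
  ultimately show ?thesis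
    using row_transvection_SL[OF r] SL_subset_G by (auto simp: Wgrp_def)
qed

lemma row_transvection_hyp0:
  assumes gB: "g \<in> B" and gGL: "g \<in> GL"
  shows "\<exists>r. r $ i0 = 0 \<and> (g \<circ> row_transvection i0 r) ` hyp0 i0 \<subseteq> hyp0 i0"
proof -
  have lin: "semilinear id g"
    using GL_linear[OF gGL] .
  define a where "a = eig0 g"
  have a: "a \<noteq> 0" "g (e i0) = a *s e i0"
    using eig0[OF gB] a_def by auto
  define r where "r = (\<chi> k. if k = i0 then 0 else - (g (e k) $ i0) / a)"
  have "g (row_transvection i0 r x) $ i0 = 0" if x: "x $ i0 = 0" for x
  proof -
    define c where "c = (\<Sum>k\<in>UNIV. r$k * x$k)"
    have "c * a = (\<Sum>k\<in>UNIV. r$k * x$k * a)"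
      by (simp add: c_def sum_distrib_right)
    also have "\<dots> = (\<Sum>k\<in>UNIV. - (g (e k) $ i0 * x$k))"
      using a(1) x by (intro sum.cong) (auto simp: r_def)
    finally have "c * a = - g x $ i0"
      using semilinear_component[OF lin, of x i0] by (simp add: mat_of_def sum_negf)
    moreover have "g (row_transvection i0 r x) = g x + (c * a) *s e i0"
      using semilinear_add[OF lin] linear_scale[OF lin] a(2)
      by (simp add: row_transvection_def c_def)
    ultimately show ?thesis
      by (simp add: std_basis_nth)
  qed
  then show ?thesis
    by (intro exI[of _ r]) (auto simp: r_def hyp0_def)
qed

lemma scaled_row_reduction_SLn:
  assumes gB: "g \<in> B" and gGL: "g \<in> GL" and one: "reduced_det g = 1"
    and r: "r $ i0 = 0" and hyp: "(g \<circ> row_transvection i0 r) ` hyp0 i0 \<subseteq> hyp0 i0"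
  shows "scalar_map (1 / eig0 g) \<circ> g \<circ> row_transvection i0 r \<in> SLn i0"
proof -
  define a w' where "a = eig0 g" and "w' = row_transvection i0 r"
  define s where "s = scalar_map (1 / a) \<circ> g \<circ> w'"
  have a: "a \<noteq> 0" "g (e i0) = a *s e i0"
    using eig0[OF gB] a_def by auto
  have w'SL: "w' \<in> SL"
    using row_transvection_SL[OF r] w'_def by simp
  have sGL: "s \<in> GL"
    unfolding s_def by (intro GL_comp scalar_map_GL gGL SL_GL[OF w'SL]) (simp add: a(1))
  have "gdet s = gdet (scalar_map (1 / a) \<circ> g) * gdet w'"
    unfolding s_def by (intro gdet_comp_linear GL_linear GL_comp scalar_map_GL gGL) (simp add: a(1))
  also have "\<dots> = (1 / a) ^ CARD('n) * gdet g"
    using gdet_comp_linear[OF GL_linear[OF scalar_map_GL], of "1 / a" g] SL_gdet[OF w'SL] a(1)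
    by (simp add: gdet_scalar_map)
  finally have "gdet s = 1"
    using one by (simp add: reduced_det_def a_def power_one_over)
  moreover have "s (e i0) = e i0"
  proof -
    have "e i0 \<in> line0 i0"
      using line0_I[of 1 i0] by simp
    then have "w' (e i0) = e i0"
      using row_transvection_Wgrp[OF r] unfolding w'_def Wgrp_def by blast
    then show ?thesis
      using a by (simp add: s_def scalar_map_def)
  qed
  moreover have "s ` hyp0 i0 = hyp0 i0"
  proof (rule endo_inj_surj)
    show "s ` hyp0 i0 \<subseteq> hyp0 i0"
      using hyp by (auto simp: s_def w'_def scalar_map_def hyp0_def)
  qed (use bij_is_inj[OF GL_bij[OF sGL]] in \<open>auto intro: inj_on_subset\<close>)
  ultimately show ?thesis
    using sGL by (simp add: SLn_def s_def a_def w'_def)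
qed

text \<open>\<open>g = w z m\<close> with \<open>w \<in> W\<close>, \<open>z \<in> Z\<close> and \<open>m \<in> SL\<^sub>n(q)\<close>, where \<open>w\<close> is a conjugate of
  the inverse of the row transvection clearing the \<open>v\<^sub>0\<close>-row of \<open>g\<close>.\<close>
lemma reduced_det_kernel_subset_M:
  assumes gB: "g \<in> B" and gGL: "g \<in> GL" and one: "reduced_det g = 1"
  shows "g \<in> Mgrp i0 G"
proof -
  have gG: "g \<in> G"
    using B_G[OF gB] .
  define a where "a = eig0 g"
  have a: "a \<noteq> 0"
    using eig0[OF gB] a_def by auto
  obtain r where r: "r $ i0 = 0" and hyp: "(g \<circ> row_transvection i0 r) ` hyp0 i0 \<subseteq> hyp0 i0"
    using row_transvection_hyp0[OF gB gGL] by blast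
  define w' where "w' = row_transvection i0 r"
  have w'W: "w' \<in> Wgrp i0 G" and w'G: "w' \<in> G"
    using row_transvection_Wgrp[OF r] row_transvection_SL[OF r] SL_subset_G w'_def by auto
  define s where "s = scalar_map (1 / a) \<circ> g \<circ> w'"
  have "scalar_map a \<circ> s \<in> setprod Zsc (SLn i0)"
    using scalar_map_Zsc[OF a] scaled_row_reduction_SLn[OF gB gGL one r hyp]
    unfolding setprod_def s_def w'_def a_def by blast
  moreover define w where "w = g \<circ> inv w' \<circ> inv g"
  have "w \<in> Wgrp i0 G"
    unfolding w_def using Wgrp_conj[OF gB Wgrp_inv[OF w'W]] .
  moreover have "g = w \<circ> (scalar_map a \<circ> s)"
    using a by (simp add: fun_eq_iff w_def s_def scalar_map_def inv_G_apply[OF gG] inv_G_apply[OF w'G])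
  ultimately show ?thesis
    unfolding Mgrp_def setprod_def by blast
qed

lemma reduced_det_kernel_conj:
  assumes w: "w \<in> B" "w \<in> GL" "reduced_det w = 1" and q: "q \<in> B"
  shows "inv q \<circ> w \<circ> q \<in> B" "inv q \<circ> w \<circ> q \<in> GL" "reduced_det (inv q \<circ> w \<circ> q) = 1"
proof -
  have iq: "inv q \<in> B" and wq: "w \<circ> q \<in> B"
    using B_inv B_comp w(1) q by blast+
  show B1: "inv q \<circ> w \<circ> q \<in> B"
    using B_comp iq w(1) q by blast
  have "reduced_det (w \<circ> q) = reduced_det q"
    using reduced_det_comp_GL[OF w(1) q w(2)] w(3) by simp
  then have "reduced_det (inv q \<circ> (w \<circ> q)) = reduced_det (inv q \<circ> q)"
    using reduced_det_comp[OF iq wq] reduced_det_comp[OF iq q] by simp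
  then show "reduced_det (inv q \<circ> w \<circ> q) = 1"
    using bij_is_inj[OF G_bij[OF B_G[OF q]]] reduced_det_id by (simp add: o_assoc)
  have "aut_of (inv q \<circ> w \<circ> q) = aut_of (inv q) \<circ> aut_of w \<circ> aut_of q"
    using aut_of_comp_G B_G iq w(1) q G_comp by metis
  then have "aut_of (inv q \<circ> w \<circ> q) = id"
    using G_GL_iff[OF B_G[OF w(1)]] w(2) aut_of_inv_G[OF B_G[OF q]] by simp
  then show "inv q \<circ> w \<circ> q \<in> GL"
    using G_GL_iff[OF B_G[OF B1]] by simp
qed

section \<open>A Weyl element and the Bruhat decomposition\<close>

lemma transvection_apply: "transvection j c u x = x + (c * x$j) *s u"
  by (simp add: transvection_def)

lemma transvection_fixes_e0: "j \<noteq> i0 \<Longrightarrow> transvection j c u (e i0) = e i0"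
  by (simp add: transvection_apply std_basis_nth)

lemma exists_SL_fixing_e0_to_e1:
  assumes "v $ i1 \<noteq> 0"
  shows "\<exists>m\<in>SL. m (e i0) = e i0 \<and> m v = (v $ i1) *s e i1"
proof -
  define u where "u = v - (v $ i1) *s e i1"
  define m where "m = transvection i1 (- 1 / v $ i1) u"
  have "m \<in> SL"
    using transvection_SL[of u i1] m_def by (simp add: u_def std_basis_nth)
  moreover have "m (e i0) = e i0"
    using transvection_fixes_e0[OF i1] m_def by simp
  moreover have "m v = (v $ i1) *s e i1"
    using assms by (simp add: m_def transvection_apply u_def vec_eq_iff std_basis_nth)
  ultimately show ?thesis
    by blast
qed

lemma exists_SL_fixing_e0_to_line_e1:
  assumes j: "j \<noteq> i0" "v $ j \<noteq> 0"
  shows "\<exists>m c. m \<in> SL \<and> m (e i0) = e i0 \<and> c \<noteq> 0 \<and> m v = c *s e i1"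
proof (cases "j = i1")
  case True
  then show ?thesis
    using exists_SL_fixing_e0_to_e1[of v] j by blast
next
  case False
  define m1 where "m1 = transvection j ((1 - v $ i1) / v $ j) (e i1)"
  have m1: "m1 \<in> SL" "m1 (e i0) = e i0"
    using transvection_SL[of "e i1" j] transvection_fixes_e0[OF j(1)] False
    by (simp_all add: m1_def std_basis_nth)
  have v1: "m1 v $ i1 = 1"
    using j(2) by (simp add: m1_def transvection_apply std_basis_nth)
  then obtain m2 where "m2 \<in> SL" "m2 (e i0) = e i0" "m2 (m1 v) = 1 *s e i1"
    using exists_SL_fixing_e0_to_e1[of "m1 v"] by auto
  then show ?thesis
    using m1 SL_comp[of m2 m1] by (intro exI[of _ "m2 \<circ> m1"] exI[of _ 1]) simp
qed

text \<open>A representative of the nontrivial double coset in the Bruhat decomposition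
  \<open>G = B \<union> B weyl B\<close>.\<close>
definition weyl :: "('a, 'n) vmap" where
  "weyl = transvection i1 (- 1) (e i0) \<circ> transvection i0 1 (e i1)"

lemma weyl_SL: "weyl \<in> SL"
  unfolding weyl_def using i1 by (intro SL_comp transvection_SL) (simp_all add: std_basis_nth)

lemma weyl_G: "weyl \<in> G"
  using weyl_SL SL_subset_G by blast

lemma weyl_GL: "weyl \<in> GL"
  using weyl_SL SL_GL by blast

lemma weyl_e0: "weyl (e i0) = e i1"
  using i1 by (simp add: weyl_def transvection_apply vec_eq_iff std_basis_nth)

lemma inv_weyl_G: "inv weyl \<in> G"
  using G_inv weyl_G by blast

lemma inv_weyl_GL: "inv weyl \<in> GL"
  using GL_inv_G weyl_G weyl_GL by blast

lemma inv_weyl_scaled_e1: "inv weyl (c *s e i1) = c *s e i0"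
  using linear_scale[OF GL_linear[OF weyl_GL]] weyl_e0 inv_G_eq[OF weyl_G] by metis

lemma e1_notin_line0: "e i1 \<notin> line0 i0"
proof
  assume "e i1 \<in> line0 i0"
  then have "e i1 = (e i1 $ i0) *s e i0"
    using line0_iff by blast
  then have "e i1 $ i1 = (0::'a)"
    using i1 by (metis std_basis_nth vector_smult_rzero vector_scalar_mult_def vec_lambda_beta
        mult_zero_left)
  then show False
    by (simp add: std_basis_nth)
qed

lemma weyl_notin_B: "weyl \<notin> B"
  using B_iff[OF weyl_G] weyl_e0 e1_notin_line0 by simp

lemma bruhat_decomposition:
  assumes h: "h \<in> G" "h \<notin> B"
  shows "\<exists>k1\<in>B. \<exists>k2\<in>B. h = k1 \<circ> weyl \<circ> k2"
proof -
  have "h (e i0) \<notin> line0 i0"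
    using B_iff h by blast
  then obtain j where "j \<noteq> i0" "h (e i0) $ j \<noteq> 0"
    using notin_line0_coord by blast
  then obtain m c where m: "m \<in> SL" "m (e i0) = e i0" "c \<noteq> 0" "m (h (e i0)) = c *s e i1"
    using exists_SL_fixing_e0_to_line_e1 by blast
  have mG: "m \<in> G" and mB: "m \<in> B"
    using SL_subset_G SL_fixing_e0_B m by auto
  define k2 where "k2 = inv weyl \<circ> m \<circ> h"
  have "k2 \<in> G"
    unfolding k2_def using G_comp inv_weyl_G mG h(1) by blast
  moreover have "k2 (e i0) = c *s e i0"
    using m(4) inv_weyl_scaled_e1 by (simp add: k2_def)
  ultimately have "k2 \<in> B"
    using B_scaled_e0 by blast
  moreover have "h = inv m \<circ> weyl \<circ> k2"
    by (simp add: fun_eq_iff k2_def inv_apply_G[OF weyl_G] inv_G_apply[OF mG])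
  ultimately show ?thesis
    using B_inv[OF mB] by blast
qed

lemma gdet_conj_weyl:
  assumes g: "g \<in> G"
  shows "gdet (inv weyl \<circ> g \<circ> weyl) = gdet g"
proof -
  have inv_det: "gdet (inv weyl) = 1"
    using gdet_inv[OF weyl_G weyl_GL] SL_gdet[OF weyl_SL] by simp
  have wg: "inv weyl \<circ> g \<in> G"
    using G_comp inv_weyl_G g by blast
  have "gdet (inv weyl \<circ> g \<circ> weyl) = gdet (inv weyl \<circ> g) * aut_of (inv weyl \<circ> g) (gdet weyl)"
    using gdet_comp_G[OF wg] by simp
  also have "\<dots> = gdet (inv weyl \<circ> g)"
    using SL_gdet[OF weyl_SL] field_aut_one[OF G_aut_of(1)[OF wg]] by simp
  also have "\<dots> = gdet g"
    using gdet_comp_linear[OF GL_linear[OF inv_weyl_GL]] inv_det by simp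
  finally show ?thesis .
qed

lemma aut_of_conj_weyl: "g \<in> G \<Longrightarrow> aut_of (inv weyl \<circ> g \<circ> weyl) = aut_of g"
  using aut_of_comp_G inv_weyl_G weyl_G G_comp G_GL_iff weyl_GL inv_weyl_GL by simp

lemma reduced_det_conj_weyl:
  assumes g: "g \<in> B" and h: "inv weyl \<circ> g \<circ> weyl \<in> B"
  shows "\<exists>c. c \<noteq> 0 \<and> reduced_det g = c ^ CARD('n) * reduced_det (inv weyl \<circ> g \<circ> weyl)"
proof -
  define a b where "a = eig0 g" and "b = eig0 (inv weyl \<circ> g \<circ> weyl)"
  have "a \<noteq> 0" "b \<noteq> 0"
    using eig0(2) g h a_def b_def by auto
  moreover have "reduced_det (inv weyl \<circ> g \<circ> weyl) = gdet g / b ^ CARD('n)"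
    using gdet_conj_weyl[OF B_G[OF g]] by (simp add: reduced_det_def b_def)
  ultimately have "reduced_det g = (b / a) ^ CARD('n) * reduced_det (inv weyl \<circ> g \<circ> weyl)"
    by (simp add: reduced_det_def a_def power_divide)
  then show ?thesis
    using \<open>a \<noteq> 0\<close> \<open>b \<noteq> 0\<close> by (intro exI[of _ "b / a"]) simp
qed

lemma prod_two_deltas:
  assumes "i \<noteq> j"
  shows "(\<Prod>k\<in>(UNIV::'n set). if k = i then x else if k = j then y else (1::'a)) = x * y"
proof -
  have "(\<Prod>k\<in>(UNIV::'n set). if k = i then x else if k = j then y else (1::'a))
      = (\<Prod>k\<in>{i, j}. if k = i then x else if k = j then y else 1)"
    by (rule prod.mono_neutral_right) auto
  then show ?thesis
    using assms by simp
qed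

text \<open>\<open>diag_pair b\<close> lies in \<open>SL\<close> and fixes \<open>v\<^sub>0\<close>, but its conjugate by \<open>weyl\<close> has
  eigenvalue \<open>b\<close> on \<open>v\<^sub>0\<close>: this is how conjugation by \<open>weyl\<close> moves the reduced determinant
  by an \<open>(n + 1)\<close>-th power.\<close>
definition diag_pair :: "'a \<Rightarrow> ('a, 'n) vmap" where
  "diag_pair b = diag_map (\<lambda>k. if k = i1 then b else if k = i2 then inverse b else 1)"

lemma diag_pair:
  assumes b: "b \<noteq> 0"
  shows "diag_pair b \<in> B" "diag_pair b \<in> GL" "reduced_det (diag_pair b) = 1"
    "inv weyl \<circ> diag_pair b \<circ> weyl \<in> B" "inv weyl \<circ> diag_pair b \<circ> weyl \<in> GL"
    "reduced_det (inv weyl \<circ> diag_pair b \<circ> weyl) = 1 / b ^ CARD('n)"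
proof -
  show GL: "diag_pair b \<in> GL"
    unfolding diag_pair_def by (rule diag_map_GL) (use b in auto)
  have det: "gdet (diag_pair b) = 1"
    unfolding diag_pair_def gdet_diag_map using prod_two_deltas[OF i2(2)[symmetric]] b
    by (simp add: i2(2)[symmetric])
  have e0: "diag_pair b (e i0) = e i0"
    using i1 i2 by (simp add: diag_pair_def diag_map_def vec_eq_iff std_basis_nth)
  have e1: "diag_pair b (e i1) = b *s e i1"
    using i2 by (simp add: diag_pair_def diag_map_def vec_eq_iff std_basis_nth)
  show B: "diag_pair b \<in> B"
    using SL_fixing_e0_B GL det e0 by (simp add: SL_def)
  show "reduced_det (diag_pair b) = 1"
    using det e0 by (simp add: reduced_det_def eig0_def std_basis_nth)
  have conj_e0: "(inv weyl \<circ> diag_pair b \<circ> weyl) (e i0) = b *s e i0"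
    using weyl_e0 e1 inv_weyl_scaled_e1 by simp
  have conj_G: "inv weyl \<circ> diag_pair b \<circ> weyl \<in> G"
    using G_comp inv_weyl_G weyl_G B_G[OF B] by blast
  then show "inv weyl \<circ> diag_pair b \<circ> weyl \<in> B"
    using B_scaled_e0 conj_e0 by blast
  show "inv weyl \<circ> diag_pair b \<circ> weyl \<in> GL"
    using aut_of_conj_weyl G_GL_iff GL B_G[OF B] conj_G by simp
  show "reduced_det (inv weyl \<circ> diag_pair b \<circ> weyl) = 1 / b ^ CARD('n)"
    using gdet_conj_weyl[OF B_G[OF B]] det conj_e0
    by (simp add: reduced_det_def eig0_def std_basis_nth)
qed

definition diag_i1 :: "'a \<Rightarrow> ('a, 'n) vmap" where
  "diag_i1 d = diag_map (\<lambda>k. if k = i1 then d else 1)"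

lemma diag_i1:
  assumes d: "d \<in> dets (GLpart G)"
  shows "diag_i1 d \<in> B" "diag_i1 d \<in> GL" "reduced_det (diag_i1 d) = d"
proof -
  obtain g0 where g0: "g0 \<in> G" "g0 \<in> GL" "gdet g0 = d"
    using d by (auto simp: dets_def GLpart_def)
  have "d \<noteq> 0"
    using gdet_nonzero g0 by blast
  then show GL: "diag_i1 d \<in> GL"
    unfolding diag_i1_def by (intro diag_map_GL) auto
  have det: "gdet (diag_i1 d) = d"
    unfolding diag_i1_def gdet_diag_map by (simp add: prod.delta)
  have "diag_i1 d \<circ> inv g0 \<in> SL"
    using GL_comp[OF GL GL_inv_G[OF g0(1,2)]] gdet_comp_linear[OF GL_linear[OF GL]] det
      gdet_inv[OF g0(1,2)] g0(3) by (simp add: SL_def)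
  then have "diag_i1 d \<circ> inv g0 \<circ> g0 \<in> G"
    using SL_subset_G G_comp g0(1) by blast
  then have "diag_i1 d \<in> G"
    using bij_is_inj[OF G_bij[OF g0(1)]] by (simp add: o_assoc[symmetric])
  moreover have e0: "diag_i1 d (e i0) = e i0"
    using i1 by (simp add: diag_i1_def diag_map_def vec_eq_iff std_basis_nth)
  ultimately show "diag_i1 d \<in> B"
    using B_scaled_e0[of _ 1] by simp
  show "reduced_det (diag_i1 d) = d"
    using det e0 by (simp add: reduced_det_def eig0_def std_basis_nth)
qed

definition reduced_dets :: "('a, 'n) vmap set \<Rightarrow> 'a set" where
  "reduced_dets H = reduced_det ` GLpart H"

lemma reduced_dets_B: "reduced_dets B = dets (GLpart G)"
proof
  show "reduced_dets B \<subseteq> dets (GLpart G)"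
  proof
    fix y
    assume "y \<in> reduced_dets B"
    then obtain g where g: "g \<in> B" "g \<in> GL" "y = reduced_det g"
      by (auto simp: reduced_dets_def GLpart_def)
    define a where "a = eig0 g"
    have a: "a \<noteq> 0"
      using eig0(2)[OF g(1)] a_def by simp
    have "gdet (g \<circ> scalar_map (1 / a)) = y"
      using gdet_comp_linear[OF GL_linear[OF g(2)]] g(3)
      by (simp add: gdet_scalar_map reduced_det_def a_def power_one_over)
    moreover have "g \<circ> scalar_map (1 / a) \<in> GLpart G"
      using G_comp[OF B_G[OF g(1)] scalar_map_G] GL_comp[OF g(2) scalar_map_GL] a
      by (simp add: GLpart_def)
    ultimately show "y \<in> dets (GLpart G)"
      by (auto simp: dets_def)
  qed
  show "dets (GLpart G) \<subseteq> reduced_dets B"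
    using diag_i1 by (force simp: reduced_dets_def GLpart_def)
qed

lemma bij_group_GLpart: "bij_group H \<Longrightarrow> H \<subseteq> G \<Longrightarrow> bij_group (GLpart H)"
  unfolding bij_group_def GLpart_def using GL_comp GL_inv_G id_SL SL_GL by blast

lemma card_eq_card_aut_of_mult_card_GLpart:
  assumes H: "bij_group H" "H \<subseteq> G"
  shows "card H = card (aut_of ` H) * card (GLpart H)"
proof -
  have "card H = card (aut_of ` H) * card {k\<in>H. aut_of k = aut_of (id :: ('a,'n) vmap)}"
  proof (rule card_eq_card_image_mult_card_kernel[of H aut_of "(\<circ>)", OF H(1)])
    show "finite H"
      by simp
    show "aut_of (x \<circ> y) = aut_of x \<circ> aut_of y" if "x \<in> H" "y \<in> H" for x y
      using aut_of_comp_G H(2) that by blast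
    show "b = c" if "a \<in> aut_of ` H" "a \<circ> b = a \<circ> c" for a b c :: "'a \<Rightarrow> 'a"
    proof -
      have "bij a"
        using that(1) H(2) G_aut_of(1) field_aut_bij by blast
      then show ?thesis
        using that(2) by (metis bij_is_inj inv_o_cancel o_assoc id_comp)
    qed
  qed
  moreover have "{k\<in>H. aut_of k = aut_of (id :: ('a,'n) vmap)} = GLpart H"
    using G_GL_iff H(2) aut_of_id by (auto simp: GLpart_def)
  ultimately show ?thesis
    by simp
qed

lemma eidx_eq_card_aut_of:
  assumes "bij_group H" "H \<subseteq> G"
  shows "eidx H = card (aut_of ` H)"
proof -
  have "id \<in> GLpart H"
    using bij_group_id[OF assms(1)] id_SL SL_GL by (simp add: GLpart_def)
  then have "card (GLpart H) > 0"
    by (auto simp: card_gt_0_iff)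
  then show ?thesis
    using card_eq_card_aut_of_mult_card_GLpart[OF assms] by (simp add: eidx_def)
qed

lemma aut_of_image_G_eq_B: "aut_of ` G = aut_of ` B"
proof
  show "aut_of ` G \<subseteq> aut_of ` B"
  proof
    fix s
    assume "s \<in> aut_of ` G"
    then obtain h where h: "h \<in> G" "s = aut_of h"
      by auto
    show "s \<in> aut_of ` B"
    proof (cases "h \<in> B")
      case False
      then obtain k1 k2 where k: "k1 \<in> B" "k2 \<in> B" "h = k1 \<circ> weyl \<circ> k2"
        using bruhat_decomposition h(1) by blast
      then have "aut_of h = aut_of k1 \<circ> aut_of weyl \<circ> aut_of k2"
        using aut_of_comp_G B_G weyl_G G_comp by metis
      also have "\<dots> = aut_of (k1 \<circ> k2)"
        using G_GL_iff[OF weyl_G] weyl_GL aut_of_comp_G B_G k by simp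
      finally show ?thesis
        using h B_comp k by blast
    qed (use h in blast)
  qed
qed (use B_G in auto)

lemma card_GLpart_eq:
  assumes H: "bij_group H" "H \<subseteq> B"
  shows "card (GLpart H) = card (reduced_dets H) * card {k\<in>GLpart H. reduced_det k = 1}"
proof -
  have "card (GLpart H) = card (reduced_det ` GLpart H)
      * card {k\<in>GLpart H. reduced_det k = reduced_det (id :: ('a,'n) vmap)}"
  proof (rule card_eq_card_image_mult_card_kernel[of "GLpart H" reduced_det "(*)"])
    show "bij_group (GLpart H)"
      using bij_group_GLpart H B_G by blast
    show "finite (GLpart H)"
      by simp
    show "reduced_det (x \<circ> y) = reduced_det x * reduced_det y" if "x \<in> GLpart H" "y \<in> GLpart H" for x y
      using reduced_det_comp_GL H(2) that by (auto simp: GLpart_def)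
    show "b = c" if "a \<in> reduced_det ` GLpart H" "a * b = a * c" for a b c
      using that reduced_det_nonzero H(2) by (auto simp: GLpart_def)
  qed
  then show ?thesis
    using reduced_det_id by (simp add: reduced_dets_def)
qed

lemma mult_subgroup_dets_G: "mult_subgroup (dets (GLpart G))"
  unfolding mult_subgroup_def dets_def GLpart_def
proof (intro conjI ballI)
  show "1 \<in> gdet ` (G \<inter> GL)"
    using G_id gdet_id id_SL SL_GL by (metis IntI image_eqI)
  show "0 \<notin> gdet ` (G \<inter> GL)"
    using gdet_nonzero by force
  fix x y
  assume "x \<in> gdet ` (G \<inter> GL)" "y \<in> gdet ` (G \<inter> GL)"
  then obtain g h where "g \<in> G \<inter> GL" "h \<in> G \<inter> GL" "x = gdet g" "y = gdet h"
    by auto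
  moreover from this have "gdet (g \<circ> h) = x * y"
    using gdet_comp_linear GL_linear by auto
  moreover have "g \<circ> h \<in> G \<inter> GL"
    using calculation G_comp GL_comp by auto
  ultimately show "x * y \<in> gdet ` (G \<inter> GL)"
    by (metis image_eqI)
qed

lemma power_in_dets_G: "c \<noteq> 0 \<Longrightarrow> c ^ CARD('n) \<in> dets (GLpart G)"
  using scalar_map_G scalar_map_GL gdet_scalar_map unfolding dets_def GLpart_def by (metis IntI image_eqI)

end

section \<open>Subgroups between \<open>M\<close> and \<open>G(\<alpha>\<^sub>0)\<close>\<close>

locale intermediate_subgroup = ZSL_overgroup G i0
  for G :: "('a::{field,finite}, 'n::finite) vmap set" and i0 :: 'n +
  fixes L :: "('a, 'n) vmap set"
  assumes L_subgroup: "is_subgroup L" and M_subset_L: "Mgrp i0 G \<subseteq> L"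
    and L_subset_B: "L \<subseteq> stab0 i0 G"
begin

lemma bij_group_L: "bij_group L"
  using is_subgroup_bij_group[OF L_subgroup] .

lemma L_B: "l \<in> L \<Longrightarrow> l \<in> B"
  using L_subset_B by blast

lemma L_G: "l \<in> L \<Longrightarrow> l \<in> G"
  using L_B B_G by blast

lemma L_comp: "g \<in> L \<Longrightarrow> h \<in> L \<Longrightarrow> g \<circ> h \<in> L"
  using bij_group_comp[OF bij_group_L] .

lemma L_inv: "g \<in> L \<Longrightarrow> inv g \<in> L"
  using bij_group_inv[OF bij_group_L] .

lemma reduced_det_kernel_subset_L: "w \<in> B \<Longrightarrow> w \<in> GL \<Longrightarrow> reduced_det w = 1 \<Longrightarrow> w \<in> L"
  using reduced_det_kernel_subset_M M_subset_L by blast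

lemma mem_L_if_reduced_det_ratio:
  assumes w: "w \<in> B" and l: "l \<in> L" and s: "aut_of l = aut_of w"
    and r: "reduced_det w / reduced_det l \<in> reduced_dets L"
  shows "w \<in> L"
proof -
  obtain k where k: "k \<in> L" "k \<in> GL" "reduced_det k = reduced_det w / reduced_det l"
    using r by (auto simp: reduced_dets_def GLpart_def)
  define v where "v = k \<circ> l"
  have vL: "v \<in> L"
    using L_comp k(1) l v_def by blast
  have "reduced_det v = reduced_det w"
    using reduced_det_comp_GL[OF L_B[OF k(1)] L_B[OF l] k(2)] k(3) reduced_det_nonzero[OF L_B[OF l]]
    by (simp add: v_def)
  moreover have "aut_of v = aut_of w"
    using aut_of_comp_G[OF L_G[OF k(1)] L_G[OF l]] G_GL_iff[OF L_G[OF k(1)]] k(2) s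
    by (simp add: v_def)
  ultimately have "reduced_det (w \<circ> inv v) = 1" "w \<circ> inv v \<in> GL"
    using reduced_det_comp_inv[OF w L_B[OF vL]] reduced_det_nonzero[OF w] by auto
  then have "w \<circ> inv v \<in> L"
    using reduced_det_kernel_subset_L B_comp[OF w B_inv[OF L_B[OF vL]]] by blast
  then have "w \<circ> inv v \<circ> v \<in> L"
    using L_comp vL by blast
  then show ?thesis
    using bij_is_inj[OF G_bij[OF L_G[OF vL]]] by (simp add: o_assoc[symmetric])
qed

lemma Zsc_subset_L: "Zsc \<subseteq> L"
proof
  fix z :: "('a, 'n) vmap"
  assume z: "z \<in> Zsc"
  have "id \<in> Wgrp i0 G"
    using G_id by (simp add: Wgrp_def line0_def)
  moreover have "id \<in> SLn i0"
    using semilinear_id gdet_id by (simp add: SLn_def GL_def)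
  ultimately have "id \<circ> (z \<circ> id) \<in> Mgrp i0 G"
    using z unfolding Mgrp_def setprod_def by blast
  then show "z \<in> L"
    using M_subset_L by auto
qed

lemma eidx_eq_iff: "eidx L = eidx G \<longleftrightarrow> aut_of ` L = aut_of ` B"
proof -
  have "eidx L = card (aut_of ` L)"
    using eidx_eq_card_aut_of bij_group_L L_G by blast
  moreover have "eidx G = card (aut_of ` B)"
    using eidx_eq_card_aut_of[OF bij_group_G] aut_of_image_G_eq_B by simp
  moreover have "aut_of ` L \<subseteq> aut_of ` B"
    using L_subset_B by auto
  ultimately show ?thesis
    using card_subset_eq[of "aut_of ` B" "aut_of ` L"] by auto
qed

definition nth_powers :: "'a set" where
  "nth_powers = {c ^ CARD('n) | c. c \<noteq> 0}"

lemma dets_GLpart_L: "dets (GLpart L) = nth_powers * reduced_dets L"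
proof
  show "dets (GLpart L) \<subseteq> nth_powers * reduced_dets L"
  proof
    fix y
    assume "y \<in> dets (GLpart L)"
    then obtain l where l: "l \<in> L" "l \<in> GL" "y = gdet l"
      by (auto simp: dets_def GLpart_def)
    have "eig0 l \<noteq> 0"
      using eig0(2)[OF L_B[OF l(1)]] .
    then have "y = eig0 l ^ CARD('n) * reduced_det l" "eig0 l ^ CARD('n) \<in> nth_powers"
      using l(3) by (auto simp: reduced_det_def nth_powers_def)
    moreover have "reduced_det l \<in> reduced_dets L"
      using l by (auto simp: reduced_dets_def GLpart_def)
    ultimately show "y \<in> nth_powers * reduced_dets L"
      by (simp add: set_times_intro)
  qed
  show "nth_powers * reduced_dets L \<subseteq> dets (GLpart L)"
  proof
    fix y
    assume "y \<in> nth_powers * reduced_dets L"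
    then obtain c l where cl: "c \<noteq> 0" "l \<in> L" "l \<in> GL" "y = c ^ CARD('n) * reduced_det l"
      by (auto elim!: set_times_elim simp: nth_powers_def reduced_dets_def GLpart_def)
    define a where "a = eig0 l"
    have a: "a \<noteq> 0"
      using eig0(2)[OF L_B[OF cl(2)]] a_def by simp
    then have "c / a \<noteq> 0"
      using cl(1) by simp
    then have "scalar_map (c / a) \<in> L" "scalar_map (c / a) \<in> GL"
      using Zsc_subset_L scalar_map_Zsc scalar_map_GL by blast+
    then have "l \<circ> scalar_map (c / a) \<in> GLpart L"
      using L_comp cl(2,3) GL_comp by (simp add: GLpart_def)
    moreover have "gdet (l \<circ> scalar_map (c / a)) = y"
      using gdet_comp_linear[OF GL_linear[OF cl(3)]] cl(4) a
      by (simp add: gdet_scalar_map reduced_det_def a_def power_divide)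
    ultimately show "y \<in> dets (GLpart L)"
      by (auto simp: dets_def)
  qed
qed

lemma dets_GLpart_L_subset: "dets (GLpart L) \<subseteq> dets (GLpart G)"
  using L_G by (auto simp: dets_def GLpart_def)

lemma mult_subgroup_reduced_dets_L: "mult_subgroup (reduced_dets L)"
  unfolding mult_subgroup_def reduced_dets_def GLpart_def
proof (intro conjI ballI)
  show "1 \<in> reduced_det ` (L \<inter> GL)"
    using bij_group_id[OF bij_group_L] reduced_det_id id_SL SL_GL by (metis IntI image_eqI)
  show "0 \<notin> reduced_det ` (L \<inter> GL)"
    using reduced_det_nonzero L_B by force
  fix x y
  assume "x \<in> reduced_det ` (L \<inter> GL)" "y \<in> reduced_det ` (L \<inter> GL)"
  then obtain g h where "g \<in> L \<inter> GL" "h \<in> L \<inter> GL" "x = reduced_det g" "y = reduced_det h"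
    by auto
  moreover from this have "reduced_det (g \<circ> h) = x * y"
    using reduced_det_comp_GL L_B by auto
  moreover have "g \<circ> h \<in> L \<inter> GL"
    using calculation L_comp GL_comp by auto
  ultimately show "x * y \<in> reduced_det ` (L \<inter> GL)"
    by (metis image_eqI)
qed

lemma reduced_dets_L_subset: "reduced_dets L \<subseteq> dets (GLpart G)"
  using reduced_dets_B L_subset_B unfolding reduced_dets_def GLpart_def by auto

lemma mult_subgroup_nth_powers: "mult_subgroup nth_powers"
  unfolding mult_subgroup_def
proof (intro conjI ballI)
  show "1 \<in> nth_powers"
    unfolding nth_powers_def by (rule CollectI, rule exI[of _ 1]) simp
  show "0 \<notin> nth_powers"
    by (auto simp: nth_powers_def)
  fix x y
  assume "x \<in> nth_powers" "y \<in> nth_powers"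
  then obtain a b where "x = a ^ CARD('n)" "y = b ^ CARD('n)" "a \<noteq> 0" "b \<noteq> 0"
    by (auto simp: nth_powers_def)
  then have "x * y = (a * b) ^ CARD('n)" "a * b \<noteq> 0"
    by (simp_all add: power_mult_distrib)
  then show "x * y \<in> nth_powers"
    unfolding nth_powers_def by blast
qed

lemma nth_powers_inverse:
  assumes "x \<in> nth_powers"
  shows "inverse x \<in> nth_powers"
proof -
  obtain c where "x = c ^ CARD('n)" "c \<noteq> 0"
    using assms by (auto simp: nth_powers_def)
  then have "inverse x = inverse c ^ CARD('n)" "inverse c \<noteq> 0"
    by (simp_all add: power_inverse)
  then show ?thesis
    unfolding nth_powers_def by blast
qed

lemma nth_powers_subset_dets_G: "nth_powers \<subseteq> dets (GLpart G)"
  using power_in_dets_G by (auto simp: nth_powers_def)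

text \<open>Both \<open>B\<close> and \<open>L\<close> contain the whole kernel of the reduced determinant on \<open>B \<inter> GL\<close>, and
  both have the full Galois part, so their orders differ only by the reduced determinants.\<close>
lemma index_B_L:
  assumes gal: "aut_of ` L = aut_of ` B"
  shows "card B div card L = card (dets (GLpart G)) div card (reduced_dets L)"
proof -
  define kernel where "kernel = {k\<in>GLpart L. reduced_det k = 1}"
  have kernels: "{k\<in>GLpart B. reduced_det k = 1} = kernel"
    unfolding kernel_def GLpart_def using reduced_det_kernel_subset_L L_B by blast
  have "B \<subseteq> G"
    using B_G by blast
  then have "card B = card (aut_of ` B) * card (GLpart B)"
    by (rule card_eq_card_aut_of_mult_card_GLpart[OF bij_group_B])
  also have "card (GLpart B) = card (dets (GLpart G)) * card kernel"
    using card_GLpart_eq[OF bij_group_B order_refl] reduced_dets_B kernels by simp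
  finally have B: "card B = card (dets (GLpart G)) * (card (aut_of ` B) * card kernel)"
    by simp
  have "L \<subseteq> G"
    using L_G by blast
  then have "card L = card (aut_of ` B) * card (GLpart L)"
    using card_eq_card_aut_of_mult_card_GLpart[OF bij_group_L] gal by simp
  also have "card (GLpart L) = card (reduced_dets L) * card kernel"
    using card_GLpart_eq[OF bij_group_L L_subset_B] unfolding kernel_def by simp
  finally have L: "card L = card (reduced_dets L) * (card (aut_of ` B) * card kernel)"
    by simp
  have "id \<in> B"
    using bij_group_id[OF bij_group_B] .
  then have "card (aut_of ` B) \<noteq> 0"
    by (simp add: card_eq_0_iff) blast
  moreover have "id \<in> kernel"
    unfolding kernel_def using bij_group_id[OF bij_group_L] reduced_det_id id_SL SL_GL
    by (simp add: GLpart_def)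
  then have "card kernel \<noteq> 0"
    by (simp add: card_eq_0_iff) blast
  ultimately show ?thesis
    unfolding B L by (simp add: div_mult_mult2)
qed

lemma units_trivial_if_generator_zero:
  fixes x :: 'a
  assumes "\<forall>x::'a. x \<noteq> 0 \<longrightarrow> (\<exists>k. x = 0 ^ k)" "x \<noteq> 0"
  shows "x = 1"
proof -
  obtain k where "x = 0 ^ k"
    using assms by blast
  then show ?thesis
    using assms(2) by (cases k) auto
qed

lemma generator_powers_eq_nth_powers:
  assumes mu: "\<forall>x::'a. x \<noteq> 0 \<longrightarrow> (\<exists>k. x = mu ^ k)" and "mu \<noteq> 0"
  shows "{mu ^ (k * CARD('n)) | k. True} = nth_powers"
proof (intro equalityI subsetI)
  fix x
  assume "x \<in> {mu ^ (k * CARD('n)) | k. True}"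
  then obtain k where "x = (mu ^ k) ^ CARD('n)"
    by (auto simp: power_mult)
  moreover have "mu ^ k \<noteq> 0"
    using \<open>mu \<noteq> 0\<close> by simp
  ultimately show "x \<in> nth_powers"
    unfolding nth_powers_def by blast
next
  fix x
  assume "x \<in> nth_powers"
  then obtain c where "x = c ^ CARD('n)" "c \<noteq> 0"
    by (auto simp: nth_powers_def)
  moreover obtain k where "c = mu ^ k"
    using mu \<open>c \<noteq> 0\<close> by blast
  ultimately have "x = mu ^ (k * CARD('n))"
    by (simp add: power_mult)
  then show "x \<in> {mu ^ (k * CARD('n)) | k. True}"
    by blast
qed

lemma Pdets_eq_cosets:
  "Pdets mu (GLpart G) = (\<lambda>\<delta>. (\<lambda>y. \<delta> * y) ` {mu ^ (k * CARD('n)) | k. True}) ` dets (GLpart G)"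
  unfolding Pdets_def Pdet_def dets_def by (simp add: image_image)

text \<open>For \<open>mu = 0\<close> the hypothesis forces \<open>\<bbbF>\<^sub>q = \<bbbF>\<^sub>2\<close>; then \<open>Pdet\<close> takes a single value.\<close>
lemma card_Pdets:
  assumes mu: "\<forall>x::'a. x \<noteq> 0 \<longrightarrow> (\<exists>k. x = mu ^ k)"
  shows "card (Pdets mu (GLpart G)) = card (dets (GLpart G)) div card nth_powers"
proof (cases "mu = 0")
  case True
  then have one: "x = 1" if "x \<noteq> 0" for x :: 'a
    using units_trivial_if_generator_zero mu that by blast
  have "nth_powers = {1}"
  proof (intro equalityI subsetI)
    fix x
    assume "x \<in> nth_powers"
    then obtain c where "x = c ^ CARD('n)" "c \<noteq> 0"
      by (auto simp: nth_powers_def)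
    then show "x \<in> {1}"
      using one by simp
  qed (use mult_subgroup_nth_powers in \<open>simp add: mult_subgroup_def\<close>)
  moreover have "dets (GLpart G) = {1}"
  proof (intro equalityI subsetI)
    fix x
    assume "x \<in> dets (GLpart G)"
    then have "x \<noteq> 0"
      using mult_subgroup_dets_G by (auto simp: mult_subgroup_def)
    then show "x \<in> {1}"
      using one by simp
  qed (use mult_subgroup_dets_G in \<open>simp add: mult_subgroup_def\<close>)
  ultimately show ?thesis
    by (simp add: Pdets_eq_cosets)
next
  case False
  then show ?thesis
    using card_cosets[OF mult_subgroup_nth_powers nth_powers_inverse mult_subgroup_dets_G _
        nth_powers_subset_dets_G]
    unfolding Pdets_eq_cosets generator_powers_eq_nth_powers[OF mu False] by simp
qed

lemma exists_field_generator:
  assumes mu: "\<forall>x::'a. x \<noteq> 0 \<longrightarrow> (\<exists>k. x = mu ^ k)"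
  shows "\<exists>g. field_generator (g::'a)"
proof (cases "mu = 0")
  case True
  then have "\<forall>x::'a. x \<noteq> 0 \<longrightarrow> (\<exists>k. x = 1 ^ k)"
    using units_trivial_if_generator_zero mu by auto
  then have "field_generator (1::'a)"
    by (simp add: field_generator_def)
  then show ?thesis
    by blast
next
  case False
  then have "field_generator mu"
    using mu by (simp add: field_generator_def)
  then show ?thesis
    by blast
qed

theorem dets_eq_iff_coprime:
  assumes gal: "aut_of ` L = aut_of ` B" and mu: "\<forall>x::'a. x \<noteq> 0 \<longrightarrow> (\<exists>k. x = mu ^ k)"
  shows "dets (GLpart L) = dets (GLpart G) \<longleftrightarrow>
         coprime (card B div card L) (card (Pdets mu (GLpart G)))"
proof -
  obtain g :: 'a where "field_generator g"
    using exists_field_generator[OF mu] by blast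
  have "dets (GLpart L) = dets (GLpart G) \<longleftrightarrow> dets (GLpart G) \<subseteq> nth_powers * reduced_dets L"
    using dets_GLpart_L dets_GLpart_L_subset by auto
  also have "\<dots> \<longleftrightarrow> coprime (card (dets (GLpart G)) div card (reduced_dets L))
                            (card (dets (GLpart G)) div card nth_powers)"
    by (rule field_generator.subset_set_times_iff_coprime[OF \<open>field_generator g\<close>
          mult_subgroup_dets_G mult_subgroup_nth_powers mult_subgroup_reduced_dets_L
          nth_powers_subset_dets_G reduced_dets_L_subset])
  finally show ?thesis
    using index_B_L[OF gal] card_Pdets[OF mu] by simp
qed

end

section \<open>2-by-block-transitivity\<close>

context intermediate_subgroup
begin

lemma lcoset_L_eq_iff: "a \<in> G \<Longrightarrow> b \<in> G \<Longrightarrow> lcoset a L = lcoset b L \<longleftrightarrow> inv a \<circ> b \<in> L"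
  using lcoset_eq_iff[OF bij_group_L] G_bij by blast

lemma lcoset_B_eq_iff: "a \<in> G \<Longrightarrow> b \<in> G \<Longrightarrow> lcoset a B = lcoset b B \<longleftrightarrow> inv a \<circ> b \<in> B"
  using lcoset_eq_iff[OF bij_group_B] G_bij by blast

text \<open>Transitivity on pairs of points of \<open>G/L\<close> in different blocks, applied to the pairs
  \<open>(L, weyl L)\<close> and \<open>(x L, weyl L)\<close>.\<close>
lemma two_by_block_transitive_witness:
  assumes T: "two_by_block_transitive G L B" and x: "x \<in> B"
  shows "\<exists>g\<in>G. inv x \<circ> g \<in> L \<and> inv weyl \<circ> g \<circ> weyl \<in> L"
proof -
  have xG: "x \<in> G"
    using B_G x by blast
  have "lcoset id B \<noteq> lcoset weyl B"
    using lcoset_B_eq_iff[OF G_id weyl_G] weyl_notin_B by simp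
  moreover have "lcoset x B \<noteq> lcoset weyl B"
  proof
    assume "lcoset x B = lcoset weyl B"
    then have "x \<circ> (inv x \<circ> weyl) \<in> B"
      using lcoset_B_eq_iff[OF xG weyl_G] B_comp x by blast
    then show False
      using weyl_notin_B bij_comp_inv[OF G_bij[OF xG]] by (simp add: o_assoc)
  qed
  ultimately obtain g where
    g: "g \<in> G" "lcoset (g \<circ> id) L = lcoset x L" "lcoset (g \<circ> weyl) L = lcoset weyl L"
    using T G_id weyl_G xG unfolding two_by_block_transitive_def by blast
  have "inv x \<circ> g \<in> L"
    using lcoset_L_eq_iff[OF xG g(1)] g(2) by simp
  moreover have "inv weyl \<circ> (g \<circ> weyl) \<in> L"
    using lcoset_L_eq_iff[OF weyl_G G_comp[OF g(1) weyl_G]] g(3) by simp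
  ultimately show ?thesis
    using g(1) by (auto simp: o_assoc)
qed

lemma two_by_block_transitive_aut_of:
  assumes T: "two_by_block_transitive G L B"
  shows "aut_of ` B \<subseteq> aut_of ` L"
proof
  fix s
  assume "s \<in> aut_of ` B"
  then obtain x where x: "x \<in> B" "s = aut_of x"
    by auto
  have xG: "x \<in> G"
    using B_G x by blast
  obtain g where g: "g \<in> G" "inv x \<circ> g \<in> L" "inv weyl \<circ> g \<circ> weyl \<in> L"
    using two_by_block_transitive_witness[OF T x(1)] by blast
  define l1 l2 where "l1 = inv x \<circ> g" and "l2 = inv weyl \<circ> g \<circ> weyl"
  have l1: "l1 \<in> L" "l1 \<in> G" and l2: "l2 \<in> L" "l2 \<in> G"
    using g(2,3) L_G unfolding l1_def l2_def by auto
  define l where "l = l2 \<circ> inv l1"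
  have lL: "l \<in> L"
    unfolding l_def using L_comp L_inv l1 l2 by blast
  have "aut_of l \<circ> aut_of l1 = aut_of (l \<circ> l1)"
    using aut_of_comp_G[OF L_G[OF lL] l1(2)] by simp
  also have "l \<circ> l1 = l2"
    using bij_is_inj[OF G_bij[OF l1(2)]] unfolding l_def by (simp add: o_assoc[symmetric])
  also have "aut_of l2 = aut_of g"
    unfolding l2_def using aut_of_conj_weyl[OF g(1)] .
  also have "g = x \<circ> l1"
    using bij_comp_inv[OF G_bij[OF xG]] unfolding l1_def by (simp add: o_assoc)
  also have "aut_of (x \<circ> l1) = aut_of x \<circ> aut_of l1"
    using aut_of_comp_G[OF xG l1(2)] .
  finally have "aut_of l \<circ> aut_of l1 = aut_of x \<circ> aut_of l1" .
  then have "aut_of l = aut_of x"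
    by (rule bij_comp_right_cancel[OF field_aut_bij[OF G_aut_of(1)[OF l1(2)]]])
  then show "s \<in> aut_of ` L"
    using x(2) by (intro image_eqI[OF _ lL]) simp
qed

lemma two_by_block_transitive_dets:
  assumes T: "two_by_block_transitive G L B"
  shows "dets (GLpart G) \<subseteq> dets (GLpart L)"
proof
  fix d
  assume d: "d \<in> dets (GLpart G)"
  define x where "x = diag_i1 d"
  have x: "x \<in> B" "x \<in> GL" "reduced_det x = d"
    using diag_i1[OF d] x_def by auto
  have xG: "x \<in> G"
    using B_G x by blast
  obtain g where g: "g \<in> G" "inv x \<circ> g \<in> L" "inv weyl \<circ> g \<circ> weyl \<in> L"
    using two_by_block_transitive_witness[OF T x(1)] by blast
  define l1 l2 where "l1 = inv x \<circ> g" and "l2 = inv weyl \<circ> g \<circ> weyl"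
  have l1: "l1 \<in> L" "l1 \<in> B" "l1 \<in> G" and l2: "l2 \<in> L" "l2 \<in> B"
    using g(2,3) L_G L_B unfolding l1_def l2_def by auto
  have xl1: "x \<circ> l1 = g"
    using bij_comp_inv[OF G_bij[OF xG]] l1_def by (simp add: o_assoc)
  then have gB: "g \<in> B"
    using B_comp[OF x(1) l1(2)] by simp
  have "reduced_det g = d * reduced_det l1"
    using reduced_det_comp_GL[OF x(1) l1(2) x(2)] xl1 x(3) by simp
  moreover obtain c where c: "c \<noteq> 0" "reduced_det g = c ^ CARD('n) * reduced_det l2"
    using reduced_det_conj_weyl[OF gB] l2 l2_def by blast
  moreover have "aut_of l2 = aut_of l1"
    using aut_of_conj_weyl[OF g(1)] aut_of_comp_G[OF xG l1(3)] xl1 G_GL_iff[OF xG] x(2) l2_def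
    by simp
  then have r: "reduced_det (l2 \<circ> inv l1) = reduced_det l2 / reduced_det l1" "l2 \<circ> inv l1 \<in> GL"
    using reduced_det_comp_inv[OF l2(2) l1(2)] by auto
  ultimately have "d * reduced_det l1 = (c ^ CARD('n) * reduced_det (l2 \<circ> inv l1)) * reduced_det l1"
    using reduced_det_nonzero[OF l1(2)] by simp
  then have "d = c ^ CARD('n) * reduced_det (l2 \<circ> inv l1)"
    using reduced_det_nonzero[OF l1(2)] by simp
  moreover have "c ^ CARD('n) \<in> nth_powers"
    using c(1) by (auto simp: nth_powers_def)
  moreover have "reduced_det (l2 \<circ> inv l1) \<in> reduced_dets L"
    using L_comp[OF l2(1) L_inv[OF l1(1)]] r(2) by (auto simp: reduced_dets_def GLpart_def)
  ultimately show "d \<in> dets (GLpart L)"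
    using dets_GLpart_L by (simp add: set_times_intro)
qed

lemma exists_kernel_elem_conj_weyl_B:
  assumes z0: "z0 \<in> B"
  shows "\<exists>m. m \<in> B \<and> m \<in> GL \<and> reduced_det m = 1 \<and> inv weyl \<circ> (z0 \<circ> m) \<circ> weyl \<in> B"
proof -
  have z0G: "z0 \<in> G"
    using B_G z0 by blast
  define v where "v = inv z0 (e i1)"
  have z0v: "z0 v = e i1"
    using inv_apply_G[OF z0G] v_def by simp
  have "v \<notin> line0 i0"
    using B_line0[OF z0] z0v e1_notin_line0 by metis
  then obtain j where "j \<noteq> i0" "v $ j \<noteq> 0"
    using notin_line0_coord by blast
  then obtain m0 c where m0: "m0 \<in> SL" "m0 (e i0) = e i0" "c \<noteq> 0" "m0 v = c *s e i1"
    using exists_SL_fixing_e0_to_line_e1 by blast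
  have m0G: "m0 \<in> G" and m0B: "m0 \<in> B" and m0GL: "m0 \<in> GL"
    using SL_subset_G SL_fixing_e0_B SL_GL m0 by auto
  have "reduced_det (inv m0) = 1"
    using reduced_det_inv[OF m0B] reduced_det_SL_fixing_e0[OF m0(1,2)] G_GL_iff[OF m0G] m0GL by simp
  moreover have "m0 ((1 / c) *s v) = e i1"
    using linear_scale[OF GL_linear[OF m0GL]] m0(3,4) by simp
  then have "inv m0 (e i1) = (1 / c) *s v"
    by (rule inv_G_eq[OF m0G])
  then have "(z0 \<circ> inv m0) (e i1) = aut_of z0 (1 / c) *s e i1"
    using semilinear_scale[OF G_aut_of(2)[OF z0G]] z0v by simp
  then have "(inv weyl \<circ> (z0 \<circ> inv m0) \<circ> weyl) (e i0) = aut_of z0 (1 / c) *s e i0"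
    using weyl_e0 inv_weyl_scaled_e1 by simp
  then have "inv weyl \<circ> (z0 \<circ> inv m0) \<circ> weyl \<in> B"
    using B_scaled_e0 G_comp inv_weyl_G weyl_G z0G G_inv[OF m0G] by metis
  ultimately show ?thesis
    using B_inv[OF m0B] GL_inv_G[OF m0G m0GL] by blast
qed

lemma reduced_det_ratio_decomposition:
  assumes det: "dets (GLpart G) \<subseteq> dets (GLpart L)"
    and W: "W \<in> B" and l: "l \<in> B" and aut: "aut_of l = aut_of W"
  shows "\<exists>c k. c \<noteq> 0 \<and> k \<in> reduced_dets L \<and> reduced_det W / reduced_det l = c ^ CARD('n) * k"
proof -
  have ratio: "reduced_det (W \<circ> inv l) = reduced_det W / reduced_det l" "W \<circ> inv l \<in> GL"
    using reduced_det_comp_inv[OF W l] aut by auto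
  then have "W \<circ> inv l \<in> GLpart B"
    using B_comp[OF W B_inv[OF l]] by (simp add: GLpart_def)
  then have "reduced_det W / reduced_det l \<in> dets (GLpart L)"
    using reduced_dets_B ratio(1) det unfolding reduced_dets_def by (metis image_eqI subsetD)
  then show ?thesis
    using dets_GLpart_L by (auto elim!: set_times_elim simp: nth_powers_def)
qed

text \<open>The \<open>(n + 1)\<close>-th power \<open>c\<^sub>0\<^bsup>n+1\<^esup>\<close> separating \<open>\<psi>(u s)\<close> from \<open>\<psi>(L \<inter> GL)\<close> is absorbed by
  the \<open>weyl\<close>-conjugate of \<open>diag_pair b\<close>, with \<open>b\<close> chosen so that \<open>\<sigma>\<^sub>u(b) = c\<^sub>0\<close>.\<close>
lemma exists_kernel_elem_conj_weyl_into_L: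
  assumes gal: "aut_of ` L = aut_of ` B" and det: "dets (GLpart G) \<subseteq> dets (GLpart L)"
    and u: "u \<in> B" and s: "s \<in> B"
  shows "\<exists>y. y \<in> B \<and> y \<in> GL \<and> reduced_det y = 1 \<and> inv weyl \<circ> y \<circ> weyl \<in> B
             \<and> u \<circ> (inv weyl \<circ> y \<circ> weyl) \<circ> s \<in> L"
proof -
  have uG: "u \<in> G" and sG: "s \<in> G"
    using B_G u s by auto
  define W where "W = u \<circ> s"
  have WB: "W \<in> B"
    using B_comp u s W_def by blast
  obtain l where l: "l \<in> L" "aut_of l = aut_of W"
    using gal WB by (metis image_iff)
  have lB: "l \<in> B"
    using L_B l(1) by blast
  obtain c0 k0 where ck: "c0 \<noteq> 0" "k0 \<in> reduced_dets L"
    "reduced_det W / reduced_det l = c0 ^ CARD('n) * k0"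
    using reduced_det_ratio_decomposition[OF det WB lB l(2)] by blast
  define \<sigma> where "\<sigma> = aut_of u"
  have fa: "field_aut \<sigma>"
    using G_aut_of(1)[OF uG] \<sigma>_def by simp
  define b where "b = inv \<sigma> c0"
  have sb: "\<sigma> b = c0"
    using field_aut_bij[OF fa] b_def by (simp add: bij_is_surj surj_f_inv_f)
  then have b0: "b \<noteq> 0"
    using ck(1) field_aut_zero[OF fa] by auto
  define y' where "y' = inv weyl \<circ> diag_pair b \<circ> weyl"
  have y': "y' \<in> B" "y' \<in> GL" "reduced_det y' = 1 / b ^ CARD('n)"
    using diag_pair[OF b0] y'_def by auto
  have y's: "y' \<circ> s \<in> B"
    using B_comp y'(1) s by blast
  have aut_eq: "aut_of (u \<circ> (y' \<circ> s)) = aut_of l"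
    using aut_of_comp_G[OF uG G_comp[OF B_G[OF y'(1)] sG]] aut_of_comp_G[OF B_G[OF y'(1)] sG]
      G_GL_iff[OF B_G[OF y'(1)]] y'(2) aut_of_comp_G[OF uG sG] l(2) W_def by simp
  have "reduced_det (u \<circ> (y' \<circ> s)) = reduced_det u * \<sigma> (reduced_det y' * reduced_det s)"
    using reduced_det_comp[OF u y's] reduced_det_comp_GL[OF y'(1) s y'(2)] \<sigma>_def by simp
  also have "\<dots> = reduced_det u * \<sigma> (reduced_det s) / c0 ^ CARD('n)"
    using y'(3) sb by (simp add: field_aut_mult[OF fa] field_aut_divide[OF fa]
        field_aut_power[OF fa] field_aut_one[OF fa])
  also have "\<dots> = reduced_det W / c0 ^ CARD('n)"
    using reduced_det_comp[OF u s] \<sigma>_def W_def by simp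
  finally have "reduced_det (u \<circ> (y' \<circ> s)) / reduced_det l = k0"
    using ck(1,3) reduced_det_nonzero[OF lB] by (simp add: field_simps)
  then have "u \<circ> (y' \<circ> s) \<in> L"
    using mem_L_if_reduced_det_ratio[OF B_comp[OF u y's] l(1)] aut_eq ck(2) by simp
  then show ?thesis
    using diag_pair[OF b0] y'_def by (auto simp: o_assoc)
qed

lemma exists_B_elem_double_coset_condition:
  assumes gal: "aut_of ` L = aut_of ` B" and det: "dets (GLpart G) \<subseteq> dets (GLpart L)"
    and p: "p \<in> B" and q: "q \<in> B" and r: "r \<in> B" and s: "s \<in> B"
  shows "\<exists>z\<in>B. p \<circ> z \<circ> q \<in> L \<and> r \<circ> (inv weyl \<circ> z \<circ> weyl) \<circ> s \<in> L"
proof -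
  have pG: "p \<in> G"
    using B_G p by blast
  define z0 where "z0 = inv p \<circ> inv q"
  have z0B: "z0 \<in> B"
    unfolding z0_def using B_comp B_inv p q by blast
  obtain m where m: "m \<in> B" "m \<in> GL" "reduced_det m = 1" "inv weyl \<circ> (z0 \<circ> m) \<circ> weyl \<in> B"
    using exists_kernel_elem_conj_weyl_B[OF z0B] by blast
  define z1' where "z1' = inv weyl \<circ> (z0 \<circ> m) \<circ> weyl"
  obtain y where y: "y \<in> B" "y \<in> GL" "reduced_det y = 1"
    "r \<circ> z1' \<circ> (inv weyl \<circ> y \<circ> weyl) \<circ> s \<in> L"
    using exists_kernel_elem_conj_weyl_into_L[OF gal det B_comp[OF r m(4)[folded z1'_def]] s]
    by blast
  define z where "z = z0 \<circ> m \<circ> y"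
  have zB: "z \<in> B"
    unfolding z_def using B_comp z0B m(1) y(1) by blast
  have "m \<circ> y \<in> B" "m \<circ> y \<in> GL" "reduced_det (m \<circ> y) = 1"
    using B_comp[OF m(1) y(1)] GL_comp[OF m(2) y(2)] reduced_det_comp_GL[OF m(1) y(1) m(2)] m(3) y(3)
    by simp_all
  then have "inv q \<circ> (m \<circ> y) \<circ> q \<in> L"
    using reduced_det_kernel_conj[OF _ _ _ q] reduced_det_kernel_subset_L by blast
  moreover have "p \<circ> z \<circ> q = inv q \<circ> (m \<circ> y) \<circ> q"
    by (simp add: fun_eq_iff z_def z0_def inv_apply_G[OF pG])
  moreover have "inv weyl \<circ> z \<circ> weyl = z1' \<circ> (inv weyl \<circ> y \<circ> weyl)"
    by (simp add: fun_eq_iff z_def z1'_def inv_apply_G[OF weyl_G])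
  then have "r \<circ> (inv weyl \<circ> z \<circ> weyl) \<circ> s \<in> L"
    using y(4) by (simp add: o_assoc)
  ultimately have "p \<circ> z \<circ> q \<in> L" "r \<circ> (inv weyl \<circ> z \<circ> weyl) \<circ> s \<in> L"
    by simp_all
  then show ?thesis
    using zB by blast
qed

lemma two_by_block_transitive_if:
  assumes gal: "aut_of ` L = aut_of ` B" and det: "dets (GLpart G) \<subseteq> dets (GLpart L)"
  shows "two_by_block_transitive G L B"
  unfolding two_by_block_transitive_def
proof (intro ballI impI)
  fix a b c d
  assume G4: "a \<in> G" "b \<in> G" "c \<in> G" "d \<in> G"
    and ne: "lcoset a B \<noteq> lcoset b B \<and> lcoset c B \<noteq> lcoset d B"
  have "inv a \<circ> b \<in> G" "inv a \<circ> b \<notin> B" "inv c \<circ> d \<in> G" "inv c \<circ> d \<notin> B"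
    using lcoset_B_eq_iff G4 ne G_comp G_inv by auto
  then obtain k1 k2 k3 k4 where k: "k1 \<in> B" "k2 \<in> B" "k3 \<in> B" "k4 \<in> B"
    and ab: "inv a \<circ> b = k1 \<circ> weyl \<circ> k2" and cd: "inv c \<circ> d = k3 \<circ> weyl \<circ> k4"
    using bruhat_decomposition by metis
  have kG: "k1 \<in> G" "k2 \<in> G" "k3 \<in> G" "k4 \<in> G"
    using B_G k by auto
  obtain z where z: "z \<in> B" "k3 \<circ> z \<circ> inv k1 \<in> L" "inv k4 \<circ> (inv weyl \<circ> z \<circ> weyl) \<circ> k2 \<in> L"
    using exists_B_elem_double_coset_condition[OF gal det k(3) B_inv[OF k(1)] B_inv[OF k(4)] k(2)]
    by blast
  define g where "g = c \<circ> (k3 \<circ> z \<circ> inv k1) \<circ> inv a"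
  have gG: "g \<in> G"
    unfolding g_def using G_comp G_inv G4 kG B_G[OF z(1)] by metis
  have "inv c \<circ> (g \<circ> a) = k3 \<circ> z \<circ> inv k1"
    by (simp add: fun_eq_iff g_def inv_G_apply[OF G4(3)] inv_G_apply[OF G4(1)])
  then have "lcoset (g \<circ> a) L = lcoset c L"
    using lcoset_L_eq_iff[OF G4(3) G_comp[OF gG G4(1)]] z(2) by simp
  moreover have "b x = a (k1 (weyl (k2 x)))" "d x = c (k3 (weyl (k4 x)))" for x
    using inv_apply_G[OF G4(1), of "b x"] inv_apply_G[OF G4(3), of "d x"]
      fun_cong[OF ab, of x] fun_cong[OF cd, of x] by simp_all
  then have "inv d \<circ> (g \<circ> b) = inv k4 \<circ> (inv weyl \<circ> z \<circ> weyl) \<circ> k2"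
    by (simp add: fun_eq_iff g_def inv_G_apply[OF G4(1)] inv_G_apply[OF kG(1)]
        inv_apply_G[OF kG(4)] inv_apply_G[OF weyl_G] inv_G_eq[OF G4(4)])
  then have "lcoset (g \<circ> b) L = lcoset d L"
    using lcoset_L_eq_iff[OF G4(4) G_comp[OF gG G4(2)]] z(3) by simp
  ultimately show "\<exists>g\<in>G. lcoset (g \<circ> a) L = lcoset c L \<and> lcoset (g \<circ> b) L = lcoset d L"
    using gG by blast
qed

theorem two_by_block_transitive_iff:
  "two_by_block_transitive G L B \<longleftrightarrow> eidx L = eidx G \<and> dets (GLpart L) = dets (GLpart G)"
  using two_by_block_transitive_aut_of two_by_block_transitive_dets two_by_block_transitive_if
    eidx_eq_iff L_subset_B dets_GLpart_L_subset by blast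

end

theorem proposition3p13:
  fixes G L :: "('a::{field,finite}, 'n::finite) vmap set"
    and mu :: 'a and i0 :: 'n and n :: nat
  assumes n: "CARD('n) = n + 1" "n \<ge> 2"
    and mu: "\<forall>x::'a. x \<noteq> 0 \<longrightarrow> (\<exists>k. x = mu ^ k)"
    and G: "is_subgroup G" "setprod Zsc SL \<subseteq> G"
    and L: "is_subgroup L" "Mgrp i0 G \<subseteq> L" "L \<subseteq> stab0 i0 G"
  shows "(two_by_block_transitive G L (stab0 i0 G)
            \<longleftrightarrow> eidx L = eidx G \<and> dets (GLpart L) = dets (GLpart G))
       \<and> (eidx L = eidx G \<and> dets (GLpart L) = dets (GLpart G)
            \<longleftrightarrow> eidx L = eidx G
                \<and> coprime (card (stab0 i0 G) div card L) (card (Pdets mu (GLpart G))))"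
proof -
  interpret intermediate_subgroup G i0 L
    using n G L by unfold_locales simp_all
  show ?thesis
    using two_by_block_transitive_iff eidx_eq_iff dets_eq_iff_coprime[OF _ mu] by blast
qed

end
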